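(* For smooth solutions (with $\rho>0$, $\Theta>0$, $\beta\in\mathcal S$), the NSME system $$\partial_t(\rho\langle m^{-1}\rangle_\beta)+\nabla_x\cdot(\rho\langle m^{-1}\rangle_\beta u)=\varepsilon\nabla_x\cdot(\nu\nabla_x\chi),\qquad \partial_t\rho+\nabla_x\cdot(\rho u)=0,$$ $$\partial_t(\rho u)+\nabla_x\cdot(\rho u\otimes u)+\nabla_x(\rho\Theta\langle m^{-1}\rangle_\beta)=\varepsilon\nabla_x\cdot(\mu\sigma(u)),$$ $$\partial_t(\rho|u|^2+n\rho\Theta\langle m^{-1}\rangle_\beta)+\nabla_x\cdot(\rho|u|^2u+(n+2)\rho\Theta\langle m^{-1}\rangle_\beta u)=\varepsilon\nabla_x\cdot\big((n+2)\nu\Theta\nabla_x\chi+2\kappa\nabla_x\Theta+2\mu\sigma(u)u\big)$$ is equivalent to the system, for the entropic variables $\mathcal A=(\mathcal A^\alpha)_{\alpha=1}^{n+3}$, $$\frac{\partial}{\partial t}\Big(\frac{\partial\Sigma}{\partial\mathcal A^\alpha}(\mathcal A)\Big)+\nabla_x\cdot\Big(\frac{\partial\Phi}{\partial\mathcal A^\alpha}(\mathcal A)\Big)=\nabla_x\cdot\Big(\sum_{\beta'=1}^{n+3}\mathbb X^{\alpha\beta'}\nabla_x\mathcal A^{\beta'}\Big),\qquad\alpha=1,\dots,n+3,$$ where the $n\times n$ blocks $\mathbb X^{\alpha\beta'}$ are defined in the context; moreover the block matrix $\mathbb X=(\mathbb X^{\alpha\beta'})$ is symmetric.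
   Context: Let $n\ge1$, $\varepsilon>0$, $(\gamma_m)_{m\ge1}$ in $[0,\infty)$ with $\mathcal S:=\{\beta:\sum_m\frac{me^{\beta m}}{\gamma_m}<\infty\}\ne\emptyset$; $\langle a_m\rangle_\beta:=\sum_m\frac{me^{\beta m}}{\gamma_m}a_m/\sum_m\frac{me^{\beta m}}{\gamma_m}$; $Z(\beta,\Theta)=(2\pi\Theta)^{n/2}\sum_m\frac{me^{\beta m}}{\gamma_m}$. Coefficients: $\mu=\rho\Theta\langle m^{-1}\rangle_\beta$, $\kappa=\frac{n+2}2\rho\Theta\langle m^{-2}\rangle_\beta$, $\nu=\rho\Theta(\langle m^{-2}\rangle_\beta-\langle m^{-1}\rangle_\beta^2)$; $\sigma(u)=\nabla_xu+(\nabla_xu)^T-\frac2n(\nabla_x\cdot u)\mathrm I_n$; $\chi=\log(\rho\Theta/\sum_m\frac{me^{\beta m}}{\gamma_m})$. Entropic variables $\mathcal A=(D,A,B,C)$ with components $\mathcal A^\alpha=D_\alpha$ ($\alpha\le n$), $\mathcal A^{n+1}=A$, $\mathcal A^{n+2}=B$, $\mathcal A^{n+3}=C$, related to $(\rho,u,\Theta,\beta)$ by $C=-\frac1{2\Theta}$, $D=\frac u\Theta$, $B=\beta-\frac{|u|^2}{2\Theta}$, $A=\log(\rho/Z(\beta,\Theta))$. With $\boldsymbol\mu_m(v)\bullet\mathcal A:=mv\cdot D+A+mB+m|v|^2C$: $\Sigma(\mathcal A)=\sum_m\int_{\mathbb{R}^n}\frac{m^{n/2}}{\gamma_m}e^{\boldsymbol\mu_m(v)\bullet\mathcal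 A}dv$, $\Phi(\mathcal A)=\sum_m\int_{\mathbb{R}^n}\frac{m^{n/2}}{\gamma_m}e^{\boldsymbol\mu_m(v)\bullet\mathcal A}v\,dv\in\mathbb{R}^n$. With $(e_1,\dots,e_n)$ the canonical basis and $\mathrm 0_n$ the zero matrix: $\mathbb X^{\alpha\beta'}=\varepsilon\mu\Theta(\mathrm I_n\delta^{\alpha\beta'}+e_{\beta'}\otimes e_\alpha-\frac2ne_\alpha\otimes e_{\beta'})$ for $\alpha,\beta'\le n$; $\mathbb X^{\alpha,n+1}=\mathbb X^{\alpha,n+2}=(\mathbb X^{n+1,\alpha})^T=(\mathbb X^{n+2,\alpha})^T=\mathrm 0_n$ for $\alpha\le n$; $\mathbb X^{\alpha,n+3}=(\mathbb X^{n+3,\alpha})^T=2\varepsilon\mu\Theta(u_\alpha\mathrm I_n+u\otimes e_\alpha-\frac2ne_\alpha\otimes u)$ for $\alpha\le n$; $\mathbb X^{n+1,n+1}=\varepsilon\nu\mathrm I_n$, $\mathbb X^{n+1,n+2}=\mathbb X^{n+2,n+1}=\mathbb X^{n+2,n+2}=\mathrm 0_n$; $\mathbb X^{n+1,n+3}=\mathbb X^{n+3,n+1}=(n+2)\varepsilon\nu\Theta\mathrm I_n$, $\mathbb X^{n+2,n+3}=\mathbb X^{n+3,n+2}=\mathrm 0_n$; $\mathbb X^{n+3,n+3}=\varepsilon\Theta[((n+2)^2\nu\Theta+4\kappa\Theta+4\mu|u|^2)\mathrm I_n+4\frac{n-2}n\mu\,u\otimes u]$. Here $(a\otimes b)_{ij}=a_ib_j$,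 and $\nabla_x\cdot$ of a matrix field acts row-wise. *)

theory Defs
  imports "HOL-Analysis.Analysis"
begin

definition dirD :: "'a::real_normed_vector \<Rightarrow> ('a \<Rightarrow> real) \<Rightarrow> 'a \<Rightarrow> real" where
  "dirD v f p = deriv (\<lambda>s. f (p + s *\<^sub>R v)) 0"

definition smooth_on :: "'a::euclidean_space set \<Rightarrow> ('a \<Rightarrow> real) \<Rightarrow> bool" where
  "smooth_on U f \<longleftrightarrow>
     (\<forall>vs. set vs \<subseteq> Basis \<longrightarrow>
        continuous_on U (foldr dirD vs f) \<and>
        (\<forall>v\<in>Basis. \<forall>p\<in>U. (\<lambda>s. foldr dirD vs f (p + s *\<^sub>R v)) differentiable (at 0)))"

definition pdt :: "(real \<Rightarrow> real^'n \<Rightarrow> real) \<Rightarrow> real \<Rightarrow> real^'n \<Rightarrow> real" where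
  "pdt f t x = deriv (\<lambda>s. f s x) t"

definition pdx :: "'n \<Rightarrow> (real \<Rightarrow> real^'n \<Rightarrow> real) \<Rightarrow> real \<Rightarrow> real^'n \<Rightarrow> real" where
  "pdx i f t x = deriv (\<lambda>s. f t (x + s *\<^sub>R axis i 1)) 0"

definition grad :: "(real \<Rightarrow> real^'n \<Rightarrow> real) \<Rightarrow> real \<Rightarrow> real^'n \<Rightarrow> real^'n" where
  "grad f t x = (\<chi> i. pdx i f t x)"

definition divg :: "(real \<Rightarrow> real^'n \<Rightarrow> real^'n) \<Rightarrow> real \<Rightarrow> real^'n \<Rightarrow> real" where
  "divg F t x = (\<Sum>i\<in>UNIV. pdx i (\<lambda>t x. F t x $ i) t x)"

definition divm :: "(real \<Rightarrow> real^'n \<Rightarrow> real^'n^'n) \<Rightarrow> real \<Rightarrow> real^'n \<Rightarrow> real^'n" where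
  "divm M t x = (\<chi> j. \<Sum>i\<in>UNIV. pdx i (\<lambda>t x. M t x $ j $ i) t x)"

definition jac :: "(real \<Rightarrow> real^'n \<Rightarrow> real^'n) \<Rightarrow> real \<Rightarrow> real^'n \<Rightarrow> real^'n^'n" where
  "jac u t x = (\<chi> i j. pdx j (\<lambda>t x. u t x $ i) t x)"

definition outer :: "real^'n \<Rightarrow> real^'n \<Rightarrow> real^'n^'n" where
  "outer a b = (\<chi> i j. a $ i * b $ j)"

definition sigma :: "(real \<Rightarrow> real^'n \<Rightarrow> real^'n) \<Rightarrow> real \<Rightarrow> real^'n \<Rightarrow> real^'n^'n" where
  "sigma u t x = jac u t x + transpose (jac u t x)
      - ((2 / real CARD('n)) * divg u t x) *\<^sub>R mat 1"

section \<open>Weights, averages, coefficients  (species index m ranges over m >= 1)\<close>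

definition wgt :: "(nat \<Rightarrow> real) \<Rightarrow> real \<Rightarrow> nat \<Rightarrow> real" where
  "wgt \<gamma> b m = real m * exp (b * real m) / \<gamma> m"

definition Wsum :: "(nat \<Rightarrow> real) \<Rightarrow> real \<Rightarrow> real" where
  "Wsum \<gamma> b = (\<Sum>m. wgt \<gamma> b (Suc m))"

definition Sset :: "(nat \<Rightarrow> real) \<Rightarrow> real set" where
  "Sset \<gamma> = {b. summable (\<lambda>m. wgt \<gamma> b (Suc m))}"

definition avg :: "(nat \<Rightarrow> real) \<Rightarrow> real \<Rightarrow> (nat \<Rightarrow> real) \<Rightarrow> real" where
  "avg \<gamma> b a = (\<Sum>m. wgt \<gamma> b (Suc m) * a (Suc m)) / Wsum \<gamma> b"

definition Zfun :: "nat \<Rightarrow> (nat \<Rightarrow> real) \<Rightarrow> real \<Rightarrow> real \<Rightarrow> real" where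
  "Zfun n \<gamma> b \<Theta> = (2 * pi * \<Theta>) powr (real n / 2) * Wsum \<gamma> b"

definition mu_c :: "(nat \<Rightarrow> real) \<Rightarrow> real \<Rightarrow> real \<Rightarrow> real \<Rightarrow> real" where
  "mu_c \<gamma> \<rho> \<Theta> b = \<rho> * \<Theta> * avg \<gamma> b (\<lambda>m. 1 / real m)"

definition kappa_c :: "nat \<Rightarrow> (nat \<Rightarrow> real) \<Rightarrow> real \<Rightarrow> real \<Rightarrow> real \<Rightarrow> real" where
  "kappa_c n \<gamma> \<rho> \<Theta> b = (real n + 2) / 2 * \<rho> * \<Theta> * avg \<gamma> b (\<lambda>m. 1 / (real m)^2)"

definition nu_c :: "(nat \<Rightarrow> real) \<Rightarrow> real \<Rightarrow> real \<Rightarrow> real \<Rightarrow> real" where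
  "nu_c \<gamma> \<rho> \<Theta> b = \<rho> * \<Theta> * (avg \<gamma> b (\<lambda>m. 1 / (real m)^2) - (avg \<gamma> b (\<lambda>m. 1 / real m))^2)"

definition chi_c :: "(nat \<Rightarrow> real) \<Rightarrow> real \<Rightarrow> real \<Rightarrow> real \<Rightarrow> real" where
  "chi_c \<gamma> \<rho> \<Theta> b = ln (\<rho> * \<Theta> / Wsum \<gamma> b)"

text \<open>Index set {1..n+3} of the entropic variables: EDi i (i = 1..n) stands
  for alpha = i (component D_i), EA for n+1, EB for n+2, EC for n+3.\<close>
datatype 'n eidx = EDi 'n | EA | EB | EC

lemma UNIV_eidx: "(UNIV :: 'n eidx set) = range EDi \<union> {EA, EB, EC}"
proof (rule set_eqI)
  fix x :: "'n eidx"
  show "x \<in> UNIV \<longleftrightarrow> x \<in> range EDi \<union> {EA, EB, EC}"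
    by (cases x) auto
qed

instance eidx :: (finite) finite
  by standard (simp add: UNIV_eidx)

definition Avar :: "(nat \<Rightarrow> real) \<Rightarrow> real \<Rightarrow> real^'n \<Rightarrow> real \<Rightarrow> real \<Rightarrow> ('n::finite) eidx \<Rightarrow> real" where
  "Avar \<gamma> \<rho> u \<Theta> b = (\<lambda>\<alpha>. case \<alpha> of
       EDi i \<Rightarrow> u $ i / \<Theta>
     | EA \<Rightarrow> ln (\<rho> / Zfun CARD('n) \<gamma> b \<Theta>)
     | EB \<Rightarrow> b - (norm u)^2 / (2 * \<Theta>)
     | EC \<Rightarrow> - 1 / (2 * \<Theta>))"

definition mudot :: "nat \<Rightarrow> real^'n \<Rightarrow> (('n::finite) eidx \<Rightarrow> real) \<Rightarrow> real" where
  "mudot m v a = real m * (v \<bullet> (\<chi> i. a (EDi i))) + a EA + real m * a EB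
                  + real m * (norm v)^2 * a EC"

definition Sigma_f :: "(nat \<Rightarrow> real) \<Rightarrow> (('n::finite) eidx \<Rightarrow> real) \<Rightarrow> real" where
  "Sigma_f \<gamma> a = (\<Sum>m. LINT v|(lborel :: (real^'n) measure).
       real (Suc m) powr (real CARD('n) / 2) / \<gamma> (Suc m) * exp (mudot (Suc m) v a))"

definition Phi_f :: "(nat \<Rightarrow> real) \<Rightarrow> (('n::finite) eidx \<Rightarrow> real) \<Rightarrow> real^'n" where
  "Phi_f \<gamma> a = (\<Sum>m. LINT v|(lborel :: (real^'n) measure).
       (real (Suc m) powr (real CARD('n) / 2) / \<gamma> (Suc m) * exp (mudot (Suc m) v a)) *\<^sub>R v)"

definition pSigma :: "(nat \<Rightarrow> real) \<Rightarrow> ('n::finite) eidx \<Rightarrow> ('n eidx \<Rightarrow> real) \<Rightarrow> real" where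
  "pSigma \<gamma> \<alpha> a = deriv (\<lambda>s. Sigma_f \<gamma> (a(\<alpha> := a \<alpha> + s))) 0"

definition pPhi :: "(nat \<Rightarrow> real) \<Rightarrow> ('n::finite) eidx \<Rightarrow> ('n eidx \<Rightarrow> real) \<Rightarrow> real^'n" where
  "pPhi \<gamma> \<alpha> a = vector_derivative (\<lambda>s. Phi_f \<gamma> (a(\<alpha> := a \<alpha> + s))) (at 0)"

definition XDC :: "real \<Rightarrow> real \<Rightarrow> real \<Rightarrow> real^'n \<Rightarrow> 'n \<Rightarrow> real^'n^'n" where
  "XDC \<epsilon> \<mu> \<Theta> u a = (2 * \<epsilon> * \<mu> * \<Theta>) *\<^sub>R ((u $ a) *\<^sub>R mat 1 + outer u (axis a 1)
        - (2 / real CARD('n)) *\<^sub>R outer (axis a 1) u)"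

definition Xblk :: "real \<Rightarrow> real \<Rightarrow> real \<Rightarrow> real \<Rightarrow> real \<Rightarrow> real^'n \<Rightarrow> ('n::finite) eidx \<Rightarrow> 'n eidx \<Rightarrow> real^'n^'n" where
  "Xblk \<epsilon> \<mu> \<nu> \<kappa> \<Theta> u \<alpha> \<beta>' =
    (case \<alpha> of
       EDi a \<Rightarrow> (case \<beta>' of
           EDi b \<Rightarrow> (\<epsilon> * \<mu> * \<Theta>) *\<^sub>R ((if a = b then mat 1 else 0) + outer (axis b 1) (axis a 1)
                        - (2 / real CARD('n)) *\<^sub>R outer (axis a 1) (axis b 1))
         | EA \<Rightarrow> 0
         | EB \<Rightarrow> 0
         | EC \<Rightarrow> XDC \<epsilon> \<mu> \<Theta> u a)
     | EA \<Rightarrow> (case \<beta>' of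
           EDi b \<Rightarrow> 0
         | EA \<Rightarrow> (\<epsilon> * \<nu>) *\<^sub>R mat 1
         | EB \<Rightarrow> 0
         | EC \<Rightarrow> ((real CARD('n) + 2) * \<epsilon> * \<nu> * \<Theta>) *\<^sub>R mat 1)
     | EB \<Rightarrow> 0
     | EC \<Rightarrow> (case \<beta>' of
           EDi b \<Rightarrow> transpose (XDC \<epsilon> \<mu> \<Theta> u b)
         | EA \<Rightarrow> ((real CARD('n) + 2) * \<epsilon> * \<nu> * \<Theta>) *\<^sub>R mat 1
         | EB \<Rightarrow> 0
         | EC \<Rightarrow> (\<epsilon> * \<Theta>) *\<^sub>R (((real CARD('n) + 2)^2 * \<nu> * \<Theta> + 4 * \<kappa> * \<Theta>
                        + 4 * \<mu> * (norm u)^2) *\<^sub>R mat 1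
                      + (4 * (real CARD('n) - 2) / real CARD('n) * \<mu>) *\<^sub>R outer u u)))"

definition Afield :: "(nat \<Rightarrow> real) \<Rightarrow> (real \<Rightarrow> real^'n \<Rightarrow> real) \<Rightarrow> (real \<Rightarrow> real^'n \<Rightarrow> real^'n)
     \<Rightarrow> (real \<Rightarrow> real^'n \<Rightarrow> real) \<Rightarrow> (real \<Rightarrow> real^'n \<Rightarrow> real) \<Rightarrow> real \<Rightarrow> real^'n \<Rightarrow> 'n eidx \<Rightarrow> real" where
  "Afield \<gamma> \<rho> u \<Theta> \<beta> t x = Avar \<gamma> (\<rho> t x) (u t x) (\<Theta> t x) (\<beta> t x)"

definition Xfield :: "(nat \<Rightarrow> real) \<Rightarrow> real \<Rightarrow> (real \<Rightarrow> real^'n \<Rightarrow> real) \<Rightarrow> (real \<Rightarrow> real^'n \<Rightarrow> real^'n)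
     \<Rightarrow> (real \<Rightarrow> real^'n \<Rightarrow> real) \<Rightarrow> (real \<Rightarrow> real^'n \<Rightarrow> real) \<Rightarrow> real \<Rightarrow> real^'n
     \<Rightarrow> 'n eidx \<Rightarrow> 'n eidx \<Rightarrow> real^'n^'n" where
  "Xfield \<gamma> \<epsilon> \<rho> u \<Theta> \<beta> t x =
     Xblk \<epsilon> (mu_c \<gamma> (\<rho> t x) (\<Theta> t x) (\<beta> t x)) (nu_c \<gamma> (\<rho> t x) (\<Theta> t x) (\<beta> t x))
          (kappa_c CARD('n) \<gamma> (\<rho> t x) (\<Theta> t x) (\<beta> t x)) (\<Theta> t x) (u t x)"

definition NSME :: "(nat \<Rightarrow> real) \<Rightarrow> real \<Rightarrow> (real \<Rightarrow> real^'n \<Rightarrow> real) \<Rightarrow> (real \<Rightarrow> real^'n \<Rightarrow> real^'n)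
     \<Rightarrow> (real \<Rightarrow> real^'n \<Rightarrow> real) \<Rightarrow> (real \<Rightarrow> real^'n \<Rightarrow> real) \<Rightarrow> real \<Rightarrow> real^'n \<Rightarrow> bool" where
  "NSME \<gamma> \<epsilon> \<rho> u \<Theta> \<beta> t x \<longleftrightarrow>
    (let n = real CARD('n);
         m1 = (\<lambda>t x. avg \<gamma> (\<beta> t x) (\<lambda>m. 1 / real m));
         muF = (\<lambda>t x. mu_c \<gamma> (\<rho> t x) (\<Theta> t x) (\<beta> t x));
         nuF = (\<lambda>t x. nu_c \<gamma> (\<rho> t x) (\<Theta> t x) (\<beta> t x));
         kaF = (\<lambda>t x. kappa_c CARD('n) \<gamma> (\<rho> t x) (\<Theta> t x) (\<beta> t x));
         chF = (\<lambda>t x. chi_c \<gamma> (\<rho> t x) (\<Theta> t x) (\<beta> t x))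
     in
      pdt (\<lambda>t x. \<rho> t x * m1 t x) t x + divg (\<lambda>t x. (\<rho> t x * m1 t x) *\<^sub>R u t x) t x
        = \<epsilon> * divg (\<lambda>t x. nuF t x *\<^sub>R grad chF t x) t x
    \<and> pdt \<rho> t x + divg (\<lambda>t x. \<rho> t x *\<^sub>R u t x) t x = 0
    \<and> (\<chi> j. pdt (\<lambda>t x. \<rho> t x * u t x $ j) t x)
        + divm (\<lambda>t x. \<rho> t x *\<^sub>R outer (u t x) (u t x)) t x
        + grad (\<lambda>t x. \<rho> t x * \<Theta> t x * m1 t x) t x
        = \<epsilon> *\<^sub>R divm (\<lambda>t x. muF t x *\<^sub>R sigma u t x) t x
    \<and> pdt (\<lambda>t x. \<rho> t x * (norm (u t x))^2 + n * \<rho> t x * \<Theta> t x * m1 t x) t x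
        + divg (\<lambda>t x. (\<rho> t x * (norm (u t x))^2) *\<^sub>R u t x
                       + ((n + 2) * \<rho> t x * \<Theta> t x * m1 t x) *\<^sub>R u t x) t x
        = \<epsilon> * divg (\<lambda>t x. ((n + 2) * nuF t x * \<Theta> t x) *\<^sub>R grad chF t x
                         + (2 * kaF t x) *\<^sub>R grad \<Theta> t x
                         + (2 * muF t x) *\<^sub>R (sigma u t x *v u t x)) t x)"

definition entropic_system :: "(nat \<Rightarrow> real) \<Rightarrow> real \<Rightarrow> (real \<Rightarrow> real^'n \<Rightarrow> real) \<Rightarrow> (real \<Rightarrow> real^'n \<Rightarrow> real^'n)
     \<Rightarrow> (real \<Rightarrow> real^'n \<Rightarrow> real) \<Rightarrow> (real \<Rightarrow> real^'n \<Rightarrow> real) \<Rightarrow> real \<Rightarrow> real^'n \<Rightarrow> bool" where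
  "entropic_system \<gamma> \<epsilon> \<rho> u \<Theta> \<beta> t x \<longleftrightarrow>
    (\<forall>\<alpha>::'n eidx.
       pdt (\<lambda>t x. pSigma \<gamma> \<alpha> (Afield \<gamma> \<rho> u \<Theta> \<beta> t x)) t x
       + divg (\<lambda>t x. pPhi \<gamma> \<alpha> (Afield \<gamma> \<rho> u \<Theta> \<beta> t x)) t x
       = divg (\<lambda>t x. \<Sum>\<beta>'\<in>UNIV. Xfield \<gamma> \<epsilon> \<rho> u \<Theta> \<beta> t x \<alpha> \<beta>'
                         *v grad (\<lambda>t x. Afield \<gamma> \<rho> u \<Theta> \<beta> t x \<beta>') t x) t x)"

end

theory Submission
  imports Defs "HOL-Probability.Distributions"
begin

text \<open>Completing the square in \<open>\<mu>\<^sub>m(v) \<bullet> \<A>\<close> turns each species integral in \<open>\<Sigma>\<close> and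
  \<open>\<Phi>\<close> into a Gaussian one: for \<open>C < 0\<close>,
  \<open>\<Sigma>(\<A>) = (\<pi>/(-C))\<^sup>n\<^sup>/\<^sup>2 e\<^sup>A S\<^sub>1(b)\<close> and \<open>\<Phi>(\<A>) = \<Sigma>(\<A>) D / (2(-C))\<close>, where
  \<open>b = B + |D|\<^sup>2/(4(-C))\<close> and \<open>S\<^sub>j(b) = \<Sum>\<^sub>m m\<^sup>j\<^sup>-\<^sup>1 e\<^sup>b\<^sup>m / \<gamma>\<^sub>m\<close> is a power series in
  \<open>e\<^sup>b\<close> with \<open>S\<^sub>j' = S\<^sub>j\<^sub>+\<^sub>1\<close>. So the partial derivatives of \<open>\<Sigma>\<close> and \<open>\<Phi>\<close> are explicit,
  and at the entropic variables of \<open>(\<rho>, u, \<Theta>, \<beta>)\<close>, where \<open>b = \<beta>\<close>, they are the densities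
  \<open>\<rho>\<langle>m\<^sup>-\<^sup>1\<rangle>, \<rho>u, \<rho>, \<rho>|u|\<^sup>2 + n\<rho>\<Theta>\<langle>m\<^sup>-\<^sup>1\<rangle>\<close> of the NSME system and their
  convective fluxes. On the diffusive side the chain rule expresses \<open>\<nabla>\<A>\<close> through \<open>\<nabla>u\<close>,
  \<open>\<nabla>\<Theta>\<close> and \<open>\<nabla>\<chi> = \<nabla>A + (n+2)\<Theta>\<nabla>C\<close>, and the blocks of \<open>\<X>\<close> turn these into exactly the
  viscous and heat fluxes. Hence the two systems agree equation by equation; the symmetry of \<open>\<X>\<close>
  is read off its blocks.\<close>

section \<open>Gaussian integrals\<close>

lemma exp_quadratic_eq_normal_density:
  fixes q p y :: real
  assumes q: "q > 0"
  shows "exp (y * p - q * y\<^sup>2)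
           = (sqrt (pi / q) * exp (p\<^sup>2 / (4 * q))) * normal_density (p / (2*q)) (sqrt (1/(2*q))) y"
proof -
  have s: "(sqrt (1/(2*q)))\<^sup>2 = 1/(2*q)" using q by simp
  have "normal_density (p / (2*q)) (sqrt (1/(2*q))) y = 1 / sqrt (pi / q) * exp (- q * (y - p/(2*q))\<^sup>2)"
    unfolding normal_density_def s using q by (simp add: field_simps)
  moreover have "sqrt (pi / q) > 0" using q by simp
  moreover have "p\<^sup>2 / (4 * q) + (- q * (y - p/(2*q))\<^sup>2) = y * p - q * y\<^sup>2"
    using q by (simp add: field_simps power2_eq_square)
  ultimately show ?thesis using q by (simp flip: exp_add)
qed

lemma has_bochner_integral_exp_quadratic:
  fixes q p :: real
  assumes q: "q > 0"
  shows "has_bochner_integral lborel (\<lambda>y. exp (y * p - q * y\<^sup>2)) (sqrt (pi / q) * exp (p\<^sup>2 / (4 * q)))"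
proof -
  have "sqrt (1/(2*q)) > 0" using q by simp
  then have "has_bochner_integral lborel (normal_density (p / (2*q)) (sqrt (1/(2*q)))) 1"
    using integrable_normal_density integral_normal_density
    by (metis has_bochner_integral_integrable)
  from has_bochner_integral_mult_right[OF this, of "sqrt (pi / q) * exp (p\<^sup>2 / (4 * q))"]
  show ?thesis by (simp add: exp_quadratic_eq_normal_density[OF q])
qed

lemma has_bochner_integral_exp_quadratic_moment:
  fixes q p :: real
  assumes q: "q > 0"
  shows "has_bochner_integral lborel (\<lambda>y. exp (y * p - q * y\<^sup>2) * y)
           (p / (2*q) * (sqrt (pi / q) * exp (p\<^sup>2 / (4 * q))))"
proof -
  have "sqrt (1/(2*q)) > 0" using q by simp
  then have "has_bochner_integral lborel (\<lambda>y. normal_density (p / (2*q)) (sqrt (1/(2*q))) y * y) (p/(2*q))"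
    by (rule normal_moment_nz_1)
  from has_bochner_integral_mult_right[OF this, of "sqrt (pi / q) * exp (p\<^sup>2 / (4 * q))"]
  show ?thesis by (simp add: exp_quadratic_eq_normal_density[OF q] mult_ac)
qed

lemma has_bochner_integral_lborel_prod_Basis:
  fixes g :: "'a::euclidean_space \<Rightarrow> real" and h :: "'a \<Rightarrow> real \<Rightarrow> real"
  assumes int: "\<And>b. b \<in> Basis \<Longrightarrow> integrable lborel (h b)"
    and g_eq: "\<And>x. g x = (\<Prod>b\<in>Basis. h b (x \<bullet> b))"
  shows "has_bochner_integral lborel g (\<Prod>b\<in>Basis. integral\<^sup>L lborel (h b))"
proof -
  interpret product_sigma_finite "\<lambda>_::'a. lborel::real measure" by standard
  let ?P = "Pi\<^sub>M (Basis::'a set) (\<lambda>_. lborel::real measure)"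
  let ?T = "\<lambda>f. \<Sum>b\<in>(Basis::'a set). f b *\<^sub>R b"
  have h_meas: "\<And>b. b \<in> Basis \<Longrightarrow> h b \<in> borel_measurable lborel" using int by auto
  have g_meas: "g \<in> borel_measurable borel"
  proof -
    have "(\<lambda>x. \<Prod>b\<in>Basis. h b (x \<bullet> b)) \<in> borel_measurable borel"
      using h_meas by (intro borel_measurable_prod) (auto intro: measurable_compose[OF _ h_meas[simplified]])
    then show ?thesis using g_eq by (simp add: fun_eq_iff[symmetric] g_eq[abs_def])
  qed
  have T_meas: "?T \<in> measurable ?P borel" by measurable
  have g_T: "g (?T x) = (\<Prod>b\<in>Basis. h b (x b))" for x
  proof -
    have "?T x \<bullet> b = x b" if "b \<in> Basis" for b
      using that by (simp add: inner_sum_left inner_Basis if_distrib cong: if_cong)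
    then show ?thesis using g_eq by (simp cong: prod.cong)
  qed
  have "integrable ?P (\<lambda>x. \<Prod>b\<in>Basis. h b (x b))"
    by (rule product_integrable_prod) (auto intro: int)
  then have "integrable lborel g"
    by (subst lborel_eq, subst integrable_distr_eq[OF T_meas g_meas]) (simp add: g_T)
  moreover have "integral\<^sup>L ?P (\<lambda>x. \<Prod>b\<in>Basis. h b (x b)) = (\<Prod>b\<in>Basis. integral\<^sup>L lborel (h b))"
    by (rule product_integral_prod) (auto intro: int)
  then have "integral\<^sup>L lborel g = (\<Prod>b\<in>Basis. integral\<^sup>L lborel (h b))"
    by (subst lborel_eq, subst integral_distr[OF T_meas g_meas]) (simp add: g_T)
  ultimately show ?thesis by (simp add: has_bochner_integral_iff)
qed

lemma power2_norm_eq_sum_Basis: "(norm (v::'a::euclidean_space))\<^sup>2 = (\<Sum>b\<in>Basis. (v \<bullet> b)\<^sup>2)"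
  by (subst power2_norm_eq_inner) (simp add: euclidean_inner[of v v] power2_eq_square)

lemma exp_gaussian_eq_prod_Basis:
  fixes v p :: "'a::euclidean_space"
  shows "exp (v \<bullet> p - q * (norm v)\<^sup>2) = (\<Prod>b\<in>Basis. exp ((v \<bullet> b) * (p \<bullet> b) - q * (v \<bullet> b)\<^sup>2))"
proof -
  have "v \<bullet> p - q * (norm v)\<^sup>2 = (\<Sum>b\<in>Basis. (v \<bullet> b) * (p \<bullet> b) - q * (v \<bullet> b)\<^sup>2)"
    by (simp add: power2_norm_eq_sum_Basis euclidean_inner[of v p] sum_subtractf sum_distrib_left)
  then show ?thesis by (simp add: exp_sum)
qed

lemma prod_Basis_gaussian_integrals:
  fixes p :: "'a::euclidean_space"
  assumes q: "q > 0"
  shows "(\<Prod>b\<in>Basis. sqrt (pi / q) * exp ((p \<bullet> b)\<^sup>2 / (4 * q)))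
     = (pi / q) powr (real DIM('a) / 2) * exp ((norm p)\<^sup>2 / (4 * q))"
proof -
  have "(\<Prod>b\<in>(Basis::'a set). exp ((p \<bullet> b)\<^sup>2 / (4 * q))) = exp ((norm p)\<^sup>2 / (4 * q))"
    by (simp add: exp_sum[symmetric] power2_norm_eq_sum_Basis sum_divide_distrib)
  moreover have "sqrt (pi / q) ^ DIM('a) = (pi / q) powr (real DIM('a) / 2)"
    using q by (simp add: powr_half_sqrt[symmetric] powr_realpow[symmetric] powr_powr)
  ultimately show ?thesis by (simp add: prod.distrib)
qed

lemma has_bochner_integral_gaussian:
  fixes p :: "'a::euclidean_space"
  assumes q: "q > 0"
  shows "has_bochner_integral lborel (\<lambda>v. exp (v \<bullet> p - q * (norm v)\<^sup>2))
           ((pi / q) powr (real DIM('a) / 2) * exp ((norm p)\<^sup>2 / (4 * q)))"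
proof -
  have "has_bochner_integral lborel (\<lambda>v. exp (v \<bullet> p - q * (norm v)\<^sup>2))
     (\<Prod>b\<in>Basis. integral\<^sup>L lborel (\<lambda>y. exp (y * (p \<bullet> b) - q * y\<^sup>2)))"
    by (rule has_bochner_integral_lborel_prod_Basis)
       (use integrable.intros[OF has_bochner_integral_exp_quadratic[OF q]] exp_gaussian_eq_prod_Basis in auto)
  moreover have "integral\<^sup>L lborel (\<lambda>y. exp (y * (p \<bullet> b) - q * y\<^sup>2)) = sqrt (pi / q) * exp ((p \<bullet> b)\<^sup>2 / (4 * q))" for b
    using has_bochner_integral_exp_quadratic[OF q] by (simp add: has_bochner_integral_iff)
  ultimately show ?thesis using prod_Basis_gaussian_integrals[OF q, of p] by simp
qed

lemma has_bochner_integral_gaussian_coordinate: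
  fixes p :: "'a::euclidean_space"
  assumes q: "q > 0" and b0: "b0 \<in> Basis"
  shows "has_bochner_integral lborel (\<lambda>v. exp (v \<bullet> p - q * (norm v)\<^sup>2) * (v \<bullet> b0))
           ((p \<bullet> b0) / (2 * q) * ((pi / q) powr (real DIM('a) / 2) * exp ((norm p)\<^sup>2 / (4 * q))))"
proof -
  define h where "h b = (if b = b0 then (\<lambda>y. exp (y * (p \<bullet> b) - q * y\<^sup>2) * y)
                         else (\<lambda>y. exp (y * (p \<bullet> b) - q * y\<^sup>2)))" for b
  have integral_h: "integral\<^sup>L lborel (h b)
      = (if b = b0 then (p \<bullet> b) / (2 * q) else 1) * (sqrt (pi / q) * exp ((p \<bullet> b)\<^sup>2 / (4 * q)))" for b
    using has_bochner_integral_exp_quadratic[OF q] has_bochner_integral_exp_quadratic_moment[OF q]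
    by (simp add: h_def has_bochner_integral_iff)
  have "has_bochner_integral lborel (\<lambda>v. exp (v \<bullet> p - q * (norm v)\<^sup>2) * (v \<bullet> b0))
          (\<Prod>b\<in>Basis. integral\<^sup>L lborel (h b))"
  proof (rule has_bochner_integral_lborel_prod_Basis)
    show "integrable lborel (h b)" if "b \<in> Basis" for b
      using integrable.intros[OF has_bochner_integral_exp_quadratic[OF q]]
        integrable.intros[OF has_bochner_integral_exp_quadratic_moment[OF q]]
      by (auto simp: h_def)
    fix x :: 'a
    have "(\<Prod>b\<in>Basis. h b (x \<bullet> b)) = h b0 (x \<bullet> b0) * (\<Prod>b\<in>Basis - {b0}. h b (x \<bullet> b))"
      using b0 by (simp add: prod.remove)
    also have "\<dots> = (x \<bullet> b0) * (\<Prod>b\<in>Basis. exp ((x \<bullet> b) * (p \<bullet> b) - q * (x \<bullet> b)\<^sup>2))"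
      using b0 by (simp add: h_def prod.remove)
    finally show "exp (x \<bullet> p - q * (norm x)\<^sup>2) * (x \<bullet> b0) = (\<Prod>b\<in>Basis. h b (x \<bullet> b))"
      by (simp add: exp_gaussian_eq_prod_Basis)
  qed
  moreover have "(\<Prod>b\<in>Basis. integral\<^sup>L lborel (h b))
      = (p \<bullet> b0) / (2 * q) * (\<Prod>b\<in>Basis. sqrt (pi / q) * exp ((p \<bullet> b)\<^sup>2 / (4 * q)))"
    using b0 by (simp add: integral_h prod.distrib prod.If_cases Int_absorb1)
  ultimately show ?thesis using prod_Basis_gaussian_integrals[OF q, of p] by simp
qed

lemma has_bochner_integral_gaussian_first_moment:
  fixes p :: "'a::euclidean_space"
  assumes q: "q > 0"
  shows "has_bochner_integral lborel (\<lambda>v. exp (v \<bullet> p - q * (norm v)\<^sup>2) *\<^sub>R v)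
           (((pi / q) powr (real DIM('a) / 2) * exp ((norm p)\<^sup>2 / (4 * q)) / (2 * q)) *\<^sub>R p)"
proof -
  let ?I = "(pi / q) powr (real DIM('a) / 2) * exp ((norm p)\<^sup>2 / (4 * q))"
  have "has_bochner_integral lborel (\<lambda>v. \<Sum>b\<in>Basis. (exp (v \<bullet> p - q * (norm v)\<^sup>2) * (v \<bullet> b)) *\<^sub>R b)
          (\<Sum>b\<in>Basis. ((p \<bullet> b) / (2 * q) * ?I) *\<^sub>R b)"
    by (intro has_bochner_integral_sum has_bochner_integral_scaleR_left
          has_bochner_integral_gaussian_coordinate[OF q]) simp
  moreover have "(\<lambda>v. \<Sum>b\<in>Basis. (exp (v \<bullet> p - q * (norm v)\<^sup>2) * (v \<bullet> b)) *\<^sub>R b)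
      = (\<lambda>v. exp (v \<bullet> p - q * (norm v)\<^sup>2) *\<^sub>R v)"
    by (simp add: scaleR_scaleR[symmetric] scaleR_sum_right[symmetric] euclidean_representation
        del: scaleR_scaleR)
  moreover have "(\<Sum>b\<in>Basis. ((p \<bullet> b) / (2 * q) * ?I) *\<^sub>R b) = (?I / (2 * q)) *\<^sub>R p"
  proof -
    have "(?I / (2 * q)) *\<^sub>R p = (?I / (2 * q)) *\<^sub>R (\<Sum>b\<in>Basis. (p \<bullet> b) *\<^sub>R b)"
      by (simp only: euclidean_representation)
    also have "\<dots> = (\<Sum>b\<in>Basis. ((p \<bullet> b) / (2 * q) * ?I) *\<^sub>R b)"
      by (simp only: scaleR_sum_right scaleR_scaleR) (intro sum.cong refl, simp)
    finally show ?thesis by simp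
  qed
  ultimately show ?thesis by simp
qed

section \<open>The moment series\<close>

definition moment_coeff :: "(nat \<Rightarrow> real) \<Rightarrow> nat \<Rightarrow> nat \<Rightarrow> real" where
  "moment_coeff \<gamma> j m = (if m = 0 then 0 else real m ^ j / (real m * \<gamma> m))"

definition moment_series :: "(nat \<Rightarrow> real) \<Rightarrow> nat \<Rightarrow> real \<Rightarrow> real" where
  "moment_series \<gamma> j b = (\<Sum>m. moment_coeff \<gamma> j m * exp b ^ m)"

lemma moment_coeff_0 [simp]: "moment_coeff \<gamma> j 0 = 0"
  by (simp add: moment_coeff_def)

lemma moment_coeff_nonneg: "\<forall>m\<ge>1. \<gamma> m > 0 \<Longrightarrow> moment_coeff \<gamma> j m \<ge> 0"
  by (cases "m = 0") (auto simp: moment_coeff_def intro!: divide_nonneg_pos)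

lemma moment_coeff_pos: "\<forall>m\<ge>1. \<gamma> m > 0 \<Longrightarrow> m \<ge> 1 \<Longrightarrow> moment_coeff \<gamma> j m > 0"
  by (auto simp: moment_coeff_def intro!: divide_pos_pos)

lemma moment_coeff_mono:
  assumes "\<forall>m\<ge>1. \<gamma> m > 0" and "j \<le> k"
  shows "moment_coeff \<gamma> j m \<le> moment_coeff \<gamma> k m"
proof (cases "m = 0")
  case False
  then have "real m ^ j \<le> real m ^ k" using assms(2) by (intro power_increasing) auto
  moreover have "\<gamma> m > 0" using assms(1) False by auto
  ultimately show ?thesis using False by (auto simp: moment_coeff_def intro!: divide_right_mono)
qed simp

lemma diffs_moment_coeff: "diffs (moment_coeff \<gamma> j) m = moment_coeff \<gamma> (Suc j) (Suc m)"
  by (simp add: diffs_def moment_coeff_def field_simps del: of_nat_Suc)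

lemma wgt_Suc_eq_moment_coeff: "wgt \<gamma> b (Suc m) = moment_coeff \<gamma> 2 (Suc m) * exp b ^ Suc m"
  by (simp add: wgt_def moment_coeff_def exp_of_nat2_mult power2_eq_square mult.commute
      del: of_nat_Suc)

lemma Sset_imp_summable_moment_coeff:
  assumes "b \<in> Sset \<gamma>"
  shows "summable (\<lambda>m. moment_coeff \<gamma> 2 m * exp b ^ m)"
proof -
  have "summable (\<lambda>m. moment_coeff \<gamma> 2 (Suc m) * exp b ^ Suc m)"
    using assms unfolding Sset_def by (simp only: mem_Collect_eq wgt_Suc_eq_moment_coeff)
  then show ?thesis by (subst summable_Suc_iff[symmetric])
qed

lemma interior_Sset_imp_gt:
  assumes "b \<in> interior (Sset \<gamma>)"
  obtains b' where "b' > b" "b' \<in> Sset \<gamma>"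
proof -
  from assms obtain e where "e > 0" "ball b e \<subseteq> Sset \<gamma>"
    by (meson mem_interior)
  then show ?thesis by (intro that[of "b + e/2"]) (auto simp: dist_real_def)
qed

text \<open>Inside the disc of convergence of the second moment, the moments up to \<open>2\<close> converge by
  comparison and the higher ones by termwise differentiation.\<close>

lemma summable_moment_power_series:
  assumes \<gamma>: "\<forall>m\<ge>1. \<gamma> m > 0" and b': "b' \<in> Sset \<gamma>" and z: "norm z < exp b'"
  shows "summable (\<lambda>m. moment_coeff \<gamma> j m * z ^ m)"
  using z
proof (induction j arbitrary: z)
  have low: "summable (\<lambda>m. moment_coeff \<gamma> j m * z ^ m)" if "j \<le> 2" "norm z < exp b'" for j z
  proof (rule summable_comparison_test)
    show "summable (\<lambda>m. norm (moment_coeff \<gamma> 2 m * z ^ m))"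
      by (rule powser_insidea[OF Sset_imp_summable_moment_coeff[OF b']]) (use that in simp)
    show "\<exists>N. \<forall>m\<ge>N. norm (moment_coeff \<gamma> j m * z ^ m) \<le> norm (moment_coeff \<gamma> 2 m * z ^ m)"
      using moment_coeff_mono[OF \<gamma> \<open>j \<le> 2\<close>] moment_coeff_nonneg[OF \<gamma>]
      by (auto simp: abs_mult intro!: mult_right_mono)
  qed
  {
    case 0
    then show ?case by (rule low[rotated]) simp
  next
    case (Suc j)
    show ?case
    proof (cases "Suc j \<le> 2")
      case True
      then show ?thesis using low Suc.prems by blast
    next
      case False
      have "summable (\<lambda>m. diffs (moment_coeff \<gamma> j) m * z ^ m)"
        by (rule termdiff_converges[OF Suc.prems Suc.IH])
      then have "summable (\<lambda>m. moment_coeff \<gamma> (Suc j) (Suc m) * z ^ Suc m)"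
        by (simp add: diffs_moment_coeff summable_mult2 mult_ac)
      then show ?thesis by (subst summable_Suc_iff[symmetric])
    qed
  }
qed

lemma summable_moment_series:
  assumes "\<forall>m\<ge>1. \<gamma> m > 0" and "b \<in> interior (Sset \<gamma>)"
  shows "summable (\<lambda>m. moment_coeff \<gamma> j m * exp b ^ m)"
  using assms(2) by (rule interior_Sset_imp_gt) (auto intro: summable_moment_power_series[OF assms(1)])

lemma moment_series_pos:
  assumes "\<forall>m\<ge>1. \<gamma> m > 0" and "b \<in> interior (Sset \<gamma>)"
  shows "moment_series \<gamma> j b > 0"
  unfolding moment_series_def
  by (rule suminf_pos2[OF summable_moment_series[OF assms], of _ 1])
     (use moment_coeff_nonneg[OF assms(1)] moment_coeff_pos[OF assms(1)] in auto)

lemma moment_series_Suc_eq: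
  assumes "summable (\<lambda>m. moment_coeff \<gamma> j m * exp b ^ m)"
  shows "(\<Sum>m. moment_coeff \<gamma> j (Suc m) * exp b ^ Suc m) = moment_series \<gamma> j b"
  unfolding moment_series_def using suminf_split_head[OF assms] by simp

lemma moment_series_has_real_derivative:
  assumes \<gamma>: "\<forall>m\<ge>1. \<gamma> m > 0" and b: "b \<in> interior (Sset \<gamma>)"
  shows "(moment_series \<gamma> j has_real_derivative moment_series \<gamma> (Suc j) b) (at b)"
proof -
  obtain b' where b': "b' > b" "b' \<in> Sset \<gamma>" using b by (rule interior_Sset_imp_gt)
  have "((\<lambda>z. \<Sum>m. moment_coeff \<gamma> j m * z ^ m) has_real_derivative
          (\<Sum>m. diffs (moment_coeff \<gamma> j) m * exp b ^ m)) (at (exp b))"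
    by (rule termdiffs_strong'[of "exp b'"]) (use b' summable_moment_power_series[OF \<gamma> b'(2)] in auto)
  from DERIV_chain2[OF this DERIV_exp]
  have "(moment_series \<gamma> j has_real_derivative (\<Sum>m. diffs (moment_coeff \<gamma> j) m * exp b ^ m) * exp b) (at b)"
    unfolding moment_series_def by simp
  moreover have "(\<Sum>m. diffs (moment_coeff \<gamma> j) m * exp b ^ m) * exp b = moment_series \<gamma> (Suc j) b"
  proof -
    have sm: "summable (\<lambda>m. moment_coeff \<gamma> (Suc j) m * exp b ^ m)"
      by (rule summable_moment_series[OF \<gamma> b])
    then have "summable (\<lambda>m. diffs (moment_coeff \<gamma> j) m * exp b ^ m)"
      by (subst (asm) summable_Suc_iff[symmetric]) (simp add: diffs_moment_coeff summable_mult2 mult_ac)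
    then have "(\<Sum>m. diffs (moment_coeff \<gamma> j) m * exp b ^ m) * exp b
        = (\<Sum>m. moment_coeff \<gamma> (Suc j) (Suc m) * exp b ^ Suc m)"
      by (subst suminf_mult2) (simp_all add: diffs_moment_coeff mult_ac)
    then show ?thesis using moment_series_Suc_eq[OF sm] by simp
  qed
  ultimately show ?thesis by simp
qed

lemma Wsum_eq_moment_series:
  assumes "\<forall>m\<ge>1. \<gamma> m > 0" and "b \<in> interior (Sset \<gamma>)"
  shows "Wsum \<gamma> b = moment_series \<gamma> 2 b"
  unfolding Wsum_def wgt_Suc_eq_moment_coeff by (rule moment_series_Suc_eq[OF summable_moment_series[OF assms]])

lemma avg_inverse_eq_moment_series:
  assumes "\<forall>m\<ge>1. \<gamma> m > 0" and "b \<in> interior (Sset \<gamma>)"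
  shows "avg \<gamma> b (\<lambda>m. 1 / real m) = moment_series \<gamma> 1 b / moment_series \<gamma> 2 b"
proof -
  have "(\<lambda>m. wgt \<gamma> b (Suc m) * (1 / real (Suc m))) = (\<lambda>m. moment_coeff \<gamma> 1 (Suc m) * exp b ^ Suc m)"
    by (simp add: fun_eq_iff wgt_def moment_coeff_def exp_of_nat2_mult mult.commute
        del: of_nat_Suc)
  then show ?thesis
    unfolding avg_def Wsum_eq_moment_series[OF assms]
    by (simp only: moment_series_Suc_eq[OF summable_moment_series[OF assms]])
qed

lemma avg_inverse_square_eq_moment_series:
  assumes "\<forall>m\<ge>1. \<gamma> m > 0" and "b \<in> interior (Sset \<gamma>)"
  shows "avg \<gamma> b (\<lambda>m. 1 / (real m)\<^sup>2) = moment_series \<gamma> 0 b / moment_series \<gamma> 2 b"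
proof -
  have "(\<lambda>m. wgt \<gamma> b (Suc m) * (1 / (real (Suc m))\<^sup>2)) = (\<lambda>m. moment_coeff \<gamma> 0 (Suc m) * exp b ^ Suc m)"
    by (simp add: fun_eq_iff wgt_def moment_coeff_def exp_of_nat2_mult power2_eq_square
        field_simps del: of_nat_Suc)
  then show ?thesis
    unfolding avg_def Wsum_eq_moment_series[OF assms]
    by (simp only: moment_series_Suc_eq[OF summable_moment_series[OF assms]])
qed

section \<open>Closed forms of \<open>\<Sigma>\<close>, \<open>\<Phi>\<close> and their partial derivatives\<close>

definition Dpart :: "(('n::finite) eidx \<Rightarrow> real) \<Rightarrow> real^'n" where
  "Dpart a = (\<chi> i. a (EDi i))"

text \<open>Completing the square, \<open>mudot m v a = A + m beta_of a - m(-C) |v - D/(2(-C))|\<^sup>2\<close>.\<close>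

definition beta_of :: "(('n::finite) eidx \<Rightarrow> real) \<Rightarrow> real" where
  "beta_of a = a EB + (norm (Dpart a))\<^sup>2 / (4 * (- a EC))"

definition gauss_factor :: "(('n::finite) eidx \<Rightarrow> real) \<Rightarrow> real" where
  "gauss_factor a = (pi / (- a EC)) powr (real CARD('n) / 2) * exp (a EA)"

definition Sigma_closed :: "(nat \<Rightarrow> real) \<Rightarrow> (('n::finite) eidx \<Rightarrow> real) \<Rightarrow> real" where
  "Sigma_closed \<gamma> a = gauss_factor a * moment_series \<gamma> 1 (beta_of a)"

lemma mudot_eq_gaussian_exponent:
  "mudot m v a = (a EA + real m * a EB) + (v \<bullet> (real m *\<^sub>R Dpart a) - (real m * (- a EC)) * (norm v)\<^sup>2)"
  by (simp add: mudot_def Dpart_def algebra_simps)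

lemma species_gaussian_value:
  fixes a :: "'n::finite eidx \<Rightarrow> real"
  assumes C: "a EC < 0" and m: "m > 0"
  shows "real m powr (real CARD('n) / 2) / \<gamma> m * exp (a EA + real m * a EB)
           * ((pi / (real m * (- a EC))) powr (real CARD('n) / 2)
              * exp ((norm (real m *\<^sub>R Dpart a))\<^sup>2 / (4 * (real m * (- a EC)))))
         = gauss_factor a * (moment_coeff \<gamma> 1 m * exp (beta_of a) ^ m)"
proof -
  have powers: "real m powr (real CARD('n) / 2) * (pi / (real m * (- a EC))) powr (real CARD('n) / 2)
      = (pi / (- a EC)) powr (real CARD('n) / 2)"
    using C m by (simp add: powr_mult[symmetric])
  have "(norm (real m *\<^sub>R Dpart a))\<^sup>2 / (4 * (real m * (- a EC)))
      = real m * ((norm (Dpart a))\<^sup>2 / (4 * (- a EC)))"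
    using C m by (simp add: power_mult_distrib field_simps power2_eq_square)
  then have exps: "exp (a EA + real m * a EB) * exp ((norm (real m *\<^sub>R Dpart a))\<^sup>2 / (4 * (real m * (- a EC))))
      = exp (a EA) * exp (beta_of a) ^ m"
    by (simp add: beta_of_def exp_add[symmetric] exp_of_nat_mult[symmetric] algebra_simps)
  have coeff: "moment_coeff \<gamma> 1 m = 1 / \<gamma> m" using m by (simp add: moment_coeff_def)
  have regroup: "P1 / g * E1 * (P2 * E2) = (P1 * P2) * (E1 * E2) * (1 / g)" for P1 P2 E1 E2 g :: real
    by (simp add: divide_inverse mult_ac)
  show ?thesis
    unfolding regroup powers exps coeff gauss_factor_def by (simp only: mult_ac)
qed

lemma has_bochner_integral_species:
  fixes a :: "'n::finite eidx \<Rightarrow> real" and \<gamma> :: "nat \<Rightarrow> real"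
  assumes C: "a EC < 0" and m: "m > 0"
  defines "w v \<equiv> real m powr (real CARD('n) / 2) / \<gamma> m * exp (mudot m v a)"
  shows "has_bochner_integral lborel (\<lambda>v::real^'n. w v)
           (gauss_factor a * (moment_coeff \<gamma> 1 m * exp (beta_of a) ^ m))"
    and "has_bochner_integral lborel (\<lambda>v::real^'n. w v *\<^sub>R v)
           ((gauss_factor a * (moment_coeff \<gamma> 1 m * exp (beta_of a) ^ m) / (2 * (- a EC))) *\<^sub>R Dpart a)"
proof -
  define c where "c = real m powr (real CARD('n) / 2) / \<gamma> m * exp (a EA + real m * a EB)"
  define q where "q = real m * (- a EC)"
  define p where "p = real m *\<^sub>R Dpart a"
  define I where "I = (pi / q) powr (real CARD('n) / 2) * exp ((norm p)\<^sup>2 / (4 * q))"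
  have q: "q > 0" unfolding q_def using C m by (intro mult_pos_pos) auto
  have w: "w v = c * exp (v \<bullet> p - q * (norm v)\<^sup>2)" for v
    unfolding w_def c_def p_def q_def mudot_eq_gaussian_exponent
      exp_add[of "a EA + real m * a EB"] by (simp only: mult.assoc)
  have integral_value: "c * I = gauss_factor a * (moment_coeff \<gamma> 1 m * exp (beta_of a) ^ m)"
    unfolding c_def I_def p_def q_def by (rule species_gaussian_value[where a=a and m=m, OF C m])
  show "has_bochner_integral lborel (\<lambda>v::real^'n. w v)
           (gauss_factor a * (moment_coeff \<gamma> 1 m * exp (beta_of a) ^ m))"
    using has_bochner_integral_mult_right[OF has_bochner_integral_gaussian[OF q, of p], of c]
    unfolding w integral_value[symmetric] I_def by simp
  have "c *\<^sub>R ((I / (2 * q)) *\<^sub>R p) = (c * I / (2 * (- a EC))) *\<^sub>R Dpart a"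
    using m by (simp add: p_def q_def)
  then show "has_bochner_integral lborel (\<lambda>v::real^'n. w v *\<^sub>R v)
           ((gauss_factor a * (moment_coeff \<gamma> 1 m * exp (beta_of a) ^ m) / (2 * (- a EC))) *\<^sub>R Dpart a)"
    using has_bochner_integral_scaleR_right[OF has_bochner_integral_gaussian_first_moment[OF q, of p], of c]
    unfolding w integral_value[symmetric] I_def by simp
qed

lemma Sigma_f_eq_closed:
  fixes a :: "'n::finite eidx \<Rightarrow> real"
  assumes C: "a EC < 0" and sm: "summable (\<lambda>m. moment_coeff \<gamma> 1 m * exp (beta_of a) ^ m)"
  shows "Sigma_f \<gamma> a = Sigma_closed \<gamma> a"
proof -
  have "Sigma_f \<gamma> a = (\<Sum>m. gauss_factor a * (moment_coeff \<gamma> 1 (Suc m) * exp (beta_of a) ^ Suc m))"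
    unfolding Sigma_f_def
    by (rule arg_cong[where f=suminf], rule ext, rule has_bochner_integral_integral_eq,
        rule has_bochner_integral_species(1)[where a=a and \<gamma>=\<gamma>, OF C], simp)
  also have "\<dots> = gauss_factor a * (\<Sum>m. moment_coeff \<gamma> 1 (Suc m) * exp (beta_of a) ^ Suc m)"
    by (rule suminf_mult[OF summable_Suc_iff[THEN iffD2, OF sm]])
  also have "\<dots> = Sigma_closed \<gamma> a"
    unfolding Sigma_closed_def moment_series_Suc_eq[OF sm] ..
  finally show ?thesis .
qed

lemma Phi_f_eq_closed:
  fixes a :: "'n::finite eidx \<Rightarrow> real"
  assumes C: "a EC < 0" and sm: "summable (\<lambda>m. moment_coeff \<gamma> 1 m * exp (beta_of a) ^ m)"
  shows "Phi_f \<gamma> a = (Sigma_closed \<gamma> a / (2 * (- a EC))) *\<^sub>R Dpart a"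
proof -
  have "Phi_f \<gamma> a = (\<Sum>m. (gauss_factor a * (moment_coeff \<gamma> 1 (Suc m) * exp (beta_of a) ^ Suc m)
                              / (2 * (- a EC))) *\<^sub>R Dpart a)"
    unfolding Phi_f_def
    by (rule arg_cong[where f=suminf], rule ext, rule has_bochner_integral_integral_eq,
        rule has_bochner_integral_species(2)[where a=a and \<gamma>=\<gamma>, OF C], simp)
  also have "\<dots> = (Sigma_closed \<gamma> a / (2 * (- a EC))) *\<^sub>R Dpart a"
  proof -
    have "(\<lambda>m. moment_coeff \<gamma> 1 (Suc m) * exp (beta_of a) ^ Suc m) sums moment_series \<gamma> 1 (beta_of a)"
      using summable_sums[OF summable_Suc_iff[THEN iffD2, OF sm]] unfolding moment_series_Suc_eq[OF sm] .
    then have "(\<lambda>m. gauss_factor a * (moment_coeff \<gamma> 1 (Suc m) * exp (beta_of a) ^ Suc m) / (2 * (- a EC)))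
        sums (Sigma_closed \<gamma> a / (2 * (- a EC)))"
      unfolding Sigma_closed_def by (intro sums_divide sums_mult)
    from sums_scaleR_left[OF this, of "Dpart a"] show ?thesis
      by (rule sums_unique[symmetric])
  qed
  finally show ?thesis .
qed

lemma eventually_nhds_isCont_in_open:
  fixes f :: "real \<Rightarrow> 'b::topological_space"
  assumes "isCont f 0" "open S" "f 0 \<in> S"
  shows "eventually (\<lambda>s. f s \<in> S) (nhds 0)"
proof -
  have "(f \<longlongrightarrow> f 0) (nhds 0)" using assms(1) by (simp add: isCont_def tendsto_at_iff_tendsto_nhds)
  then show ?thesis using assms(2,3) by (rule topological_tendstoD)
qed

lemma vector_derivative_at_eventually_eq:
  fixes f g :: "real \<Rightarrow> 'a::real_normed_vector"
  assumes "(g has_vector_derivative d) (at x)" "eventually (\<lambda>s. f s = g s) (nhds x)"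
  shows "vector_derivative f (at x) = d"
proof -
  have "f x = g x" using assms(2) by (rule eventually_nhds_x_imp_x)
  then have "(f has_vector_derivative d) (at x)"
    using assms has_vector_derivative_cong_ev[where S=UNIV and f=f and g=g and x=x] by (simp add: eventually_mono)
  then show ?thesis by (rule vector_derivative_at)
qed

definition D_unit :: "'n::finite eidx \<Rightarrow> real^'n" where
  "D_unit \<alpha> = (\<chi> i. if \<alpha> = EDi i then 1 else 0)"

lemma D_unit_simps [simp]:
  "D_unit (EDi i) = axis i 1" "D_unit EA = 0" "D_unit EB = 0" "D_unit EC = 0"
  by (simp_all add: D_unit_def axis_def vec_eq_iff)

abbreviation shift_var :: "('a \<Rightarrow> real) \<Rightarrow> 'a \<Rightarrow> real \<Rightarrow> 'a \<Rightarrow> real" where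
  "shift_var a \<alpha> s \<equiv> a(\<alpha> := a \<alpha> + s)"

lemma Dpart_shift_var: "Dpart (shift_var a \<alpha> s) = Dpart a + s *\<^sub>R D_unit \<alpha>"
  by (simp add: Dpart_def D_unit_def vec_eq_iff)

lemma power2_norm_add_axis:
  fixes D :: "real^'n::finite"
  shows "(norm (D + s *\<^sub>R axis i 1))\<^sup>2 = (norm D)\<^sup>2 + 2 * s * (D $ i) + s\<^sup>2"
proof -
  have "(norm (D + s *\<^sub>R axis i 1))\<^sup>2 = (D + s *\<^sub>R axis i 1) \<bullet> (D + s *\<^sub>R axis i 1)"
    by (rule power2_norm_eq_inner)
  also have "\<dots> = D \<bullet> D + 2 * s * (D $ i) + s\<^sup>2"
    by (simp add: inner_add_left inner_add_right inner_axis inner_commute[of "axis i 1"]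
        power2_eq_square algebra_simps)
  finally show ?thesis by (simp add: power2_norm_eq_inner)
qed

text \<open>\<open>pSigma\<close> and \<open>pPhi\<close> only see \<open>\<Sigma>\<close> and \<open>\<Phi>\<close> near \<open>\<A>\<close> along one coordinate, where
  \<open>C < 0\<close> and \<open>beta_of\<close> stays in the interior of \<open>Sset\<close>, so the closed forms may be used there.\<close>

lemma eventually_closed_forms:
  fixes a :: "'n::finite eidx \<Rightarrow> real"
  assumes \<gamma>: "\<forall>m\<ge>1. \<gamma> m > 0" and C: "a EC < 0" and b: "beta_of a \<in> interior (Sset \<gamma>)"
  shows "eventually (\<lambda>s. Sigma_f \<gamma> (shift_var a \<alpha> s) = Sigma_closed \<gamma> (shift_var a \<alpha> s)
           \<and> Phi_f \<gamma> (shift_var a \<alpha> s) = (Sigma_closed \<gamma> (shift_var a \<alpha> s)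
                 / (2 * (- (shift_var a \<alpha> s) EC))) *\<^sub>R Dpart (shift_var a \<alpha> s)) (nhds 0)"
proof -
  define k where "k = (if EC = \<alpha> then 1 else (0::real))"
  define kb where "kb = (if EB = \<alpha> then 1 else (0::real))"
  have shift_C: "(shift_var a \<alpha> s) EC = a EC + s * k" for s by (auto simp: k_def)
  have shift_beta: "beta_of (shift_var a \<alpha> s)
      = (a EB + s * kb) + (norm (Dpart a + s *\<^sub>R D_unit \<alpha>))\<^sup>2 / (4 * (- (a EC + s * k)))" for s
    unfolding beta_of_def Dpart_shift_var shift_C by (auto simp: kb_def)
  have "eventually (\<lambda>s. a EC + s * k \<in> {..<0}) (nhds 0)"
    by (rule eventually_nhds_isCont_in_open) (use C in \<open>auto intro!: continuous_intros\<close>)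
  moreover have "eventually (\<lambda>s. (a EB + s * kb) + (norm (Dpart a + s *\<^sub>R D_unit \<alpha>))\<^sup>2
                                   / (4 * (- (a EC + s * k))) \<in> interior (Sset \<gamma>)) (nhds 0)"
    by (rule eventually_nhds_isCont_in_open)
       (use C b in \<open>auto intro!: continuous_intros simp: beta_of_def\<close>)
  ultimately have "eventually (\<lambda>s. (shift_var a \<alpha> s) EC < 0
                      \<and> beta_of (shift_var a \<alpha> s) \<in> interior (Sset \<gamma>)) (nhds 0)"
    unfolding shift_C shift_beta by eventually_elim auto
  then show ?thesis
    by eventually_elim (blast intro: Sigma_f_eq_closed Phi_f_eq_closed summable_moment_series[OF \<gamma>])
qed

lemma moment_series_1_chain:
  assumes "\<forall>m\<ge>1. \<gamma> m > 0" and "(h has_real_derivative h') (at 0)"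
    and "h 0 = b" and "b \<in> interior (Sset \<gamma>)"
  shows "((\<lambda>s. moment_series \<gamma> 1 (h s)) has_real_derivative moment_series \<gamma> 2 b * h') (at 0)"
  using DERIV_chain2[OF moment_series_has_real_derivative[OF assms(1,4), of 1, folded assms(3)] assms(2)]
    assms(3) by (simp add: numeral_2_eq_2)

context
  fixes \<gamma> :: "nat \<Rightarrow> real" and a :: "'n::finite eidx \<Rightarrow> real"
  assumes \<gamma>: "\<forall>m\<ge>1. \<gamma> m > 0" and C: "a EC < 0" and b: "beta_of a \<in> interior (Sset \<gamma>)"
begin

lemma Sigma_closed_has_derivative_A:
  "((\<lambda>s. Sigma_closed \<gamma> (shift_var a EA s)) has_real_derivative Sigma_closed \<gamma> a) (at 0)"
proof -
  have "(\<lambda>s. Sigma_closed \<gamma> (shift_var a EA s))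
      = (\<lambda>s. (pi / (- a EC)) powr (real CARD('n) / 2) * exp (a EA + s) * moment_series \<gamma> 1 (beta_of a))"
    by (simp add: fun_eq_iff Sigma_closed_def gauss_factor_def beta_of_def Dpart_def)
  then show ?thesis
    by (auto intro!: derivative_eq_intros simp: Sigma_closed_def gauss_factor_def)
qed

lemma Sigma_closed_has_derivative_B:
  "((\<lambda>s. Sigma_closed \<gamma> (shift_var a EB s)) has_real_derivative
      gauss_factor a * moment_series \<gamma> 2 (beta_of a)) (at 0)"
proof -
  have "(\<lambda>s. Sigma_closed \<gamma> (shift_var a EB s)) = (\<lambda>s. gauss_factor a * moment_series \<gamma> 1 (beta_of a + s))"
    by (simp add: fun_eq_iff Sigma_closed_def gauss_factor_def beta_of_def Dpart_def algebra_simps)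
  moreover have "((\<lambda>s. beta_of a + s) has_real_derivative 1) (at 0)"
    by (auto intro!: derivative_eq_intros)
  from moment_series_1_chain[OF \<gamma> this _ b]
  have "((\<lambda>s. moment_series \<gamma> 1 (beta_of a + s)) has_real_derivative moment_series \<gamma> 2 (beta_of a)) (at 0)"
    by simp
  ultimately show ?thesis by (auto intro!: derivative_eq_intros)
qed

lemma Sigma_closed_has_derivative_D:
  "((\<lambda>s. Sigma_closed \<gamma> (shift_var a (EDi i) s)) has_real_derivative
      gauss_factor a * moment_series \<gamma> 2 (beta_of a) * (Dpart a $ i / (2 * (- a EC)))) (at 0)"
proof -
  define h where "h s = a EB + ((norm (Dpart a))\<^sup>2 + 2 * s * (Dpart a $ i) + s\<^sup>2) / (4 * (- a EC))" for s
  have "(\<lambda>s. Sigma_closed \<gamma> (shift_var a (EDi i) s)) = (\<lambda>s. gauss_factor a * moment_series \<gamma> 1 (h s))"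
    by (simp add: fun_eq_iff Sigma_closed_def gauss_factor_def beta_of_def Dpart_shift_var
        power2_norm_add_axis h_def)
  moreover have "(h has_real_derivative (Dpart a $ i / (2 * (- a EC)))) (at 0)"
    unfolding h_def using C by (auto intro!: derivative_eq_intros simp: field_simps)
  from moment_series_1_chain[OF \<gamma> this _ b]
  have "((\<lambda>s. moment_series \<gamma> 1 (h s)) has_real_derivative
               moment_series \<gamma> 2 (beta_of a) * (Dpart a $ i / (2 * (- a EC)))) (at 0)"
    by (simp add: h_def beta_of_def)
  ultimately show ?thesis by (auto intro!: derivative_eq_intros)
qed

lemma Sigma_closed_has_derivative_C:
  "((\<lambda>s. Sigma_closed \<gamma> (shift_var a EC s)) has_real_derivative
      (real CARD('n) / 2) / (- a EC) * Sigma_closed \<gamma> a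
      + gauss_factor a * moment_series \<gamma> 2 (beta_of a) * ((norm (Dpart a))\<^sup>2 / (4 * (- a EC)\<^sup>2))) (at 0)"
proof -
  let ?r = "real CARD('n) / 2" and ?K = "- a EC"
  define h where "h s = a EB + (norm (Dpart a))\<^sup>2 / (4 * (?K - s))" for s
  have closed_form: "(\<lambda>s. Sigma_closed \<gamma> (shift_var a EC s))
      = (\<lambda>s. (pi / (?K - s)) powr ?r * exp (a EA) * moment_series \<gamma> 1 (h s))"
    by (simp add: fun_eq_iff Sigma_closed_def gauss_factor_def beta_of_def Dpart_def h_def)
  have "(h has_real_derivative ((norm (Dpart a))\<^sup>2 / (4 * ?K\<^sup>2))) (at 0)"
    unfolding h_def using C by (auto intro!: derivative_eq_intros simp: field_simps power2_eq_square)
  from moment_series_1_chain[OF \<gamma> this _ b]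
  have d_series: "((\<lambda>s. moment_series \<gamma> 1 (h s)) has_real_derivative
               moment_series \<gamma> 2 (beta_of a) * ((norm (Dpart a))\<^sup>2 / (4 * ?K\<^sup>2))) (at 0)"
    by (simp add: h_def beta_of_def)
  have powr_step: "r * (pi / K) powr (r - 1) * (pi / K\<^sup>2) = r * (pi / K) powr r / K" if "K > 0" for K r
  proof -
    have "(pi / K) powr (r - 1) = (pi / K) powr r / (pi / K)"
      using that by (simp add: powr_diff)
    then show ?thesis using that by (simp add: field_simps power2_eq_square)
  qed
  have "((\<lambda>s. pi / (?K - s)) has_real_derivative pi / ?K\<^sup>2) (at 0)"
    using C by (auto intro!: derivative_eq_intros simp: field_simps power2_eq_square)
  then have "((\<lambda>s. (pi / (?K - s)) powr ?r) has_real_derivative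
               ?r * (pi / (?K - 0)) powr (?r - of_nat 1) * (pi / ?K\<^sup>2)) (at 0)"
    by (rule DERIV_fun_powr) (use C pi_gt_zero in \<open>simp add: divide_pos_neg\<close>)
  moreover have "?r * (pi / (?K - 0)) powr (?r - of_nat 1) * (pi / ?K\<^sup>2) = ?r * (pi / ?K) powr ?r / ?K"
    using powr_step[of ?K ?r] C by simp
  ultimately have d_powr: "((\<lambda>s. (pi / (?K - s)) powr ?r) has_real_derivative ?r * (pi / ?K) powr ?r / ?K) (at 0)"
    by simp
  show ?thesis
    unfolding closed_form
    by (rule DERIV_cong[OF DERIV_mult[OF DERIV_mult[OF d_powr DERIV_const] d_series]])
       (use C in \<open>simp add: Sigma_closed_def gauss_factor_def h_def beta_of_def field_simps\<close>)
qed

lemma pSigma_eq_deriv_Sigma_closed: "pSigma \<gamma> \<alpha> a = deriv (\<lambda>s. Sigma_closed \<gamma> (shift_var a \<alpha> s)) 0"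
  unfolding pSigma_def
  by (rule deriv_cong_ev) (use eventually_closed_forms[OF \<gamma> C b, of \<alpha>] in \<open>auto elim: eventually_mono\<close>)

lemma has_real_derivative_Sigma_closed_imp_pSigma:
  "((\<lambda>s. Sigma_closed \<gamma> (shift_var a \<alpha> s)) has_real_derivative d) (at 0) \<Longrightarrow> pSigma \<gamma> \<alpha> a = d"
  unfolding pSigma_eq_deriv_Sigma_closed by (rule DERIV_imp_deriv)

lemma pSigma_A: "pSigma \<gamma> EA a = Sigma_closed \<gamma> a"
  and pSigma_B: "pSigma \<gamma> EB a = gauss_factor a * moment_series \<gamma> 2 (beta_of a)"
  and pSigma_D: "pSigma \<gamma> (EDi i) a
                   = gauss_factor a * moment_series \<gamma> 2 (beta_of a) * (Dpart a $ i / (2 * (- a EC)))"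
  and pSigma_C: "pSigma \<gamma> EC a = (real CARD('n) / 2) / (- a EC) * Sigma_closed \<gamma> a
                   + gauss_factor a * moment_series \<gamma> 2 (beta_of a) * ((norm (Dpart a))\<^sup>2 / (4 * (- a EC)\<^sup>2))"
  by (rule has_real_derivative_Sigma_closed_imp_pSigma, fact Sigma_closed_has_derivative_A
      Sigma_closed_has_derivative_B Sigma_closed_has_derivative_D Sigma_closed_has_derivative_C)+

lemma Sigma_closed_has_derivative_pSigma:
  "((\<lambda>s. Sigma_closed \<gamma> (shift_var a \<alpha> s)) has_real_derivative pSigma \<gamma> \<alpha> a) (at 0)"
  by (cases \<alpha>) (simp_all only: pSigma_A pSigma_B pSigma_D pSigma_C Sigma_closed_has_derivative_A
      Sigma_closed_has_derivative_B Sigma_closed_has_derivative_D Sigma_closed_has_derivative_C)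

lemma pPhi_eq:
  assumes "\<alpha> \<noteq> EC"
  shows "pPhi \<gamma> \<alpha> a = (pSigma \<gamma> \<alpha> a / (2 * (- a EC))) *\<^sub>R Dpart a + (Sigma_closed \<gamma> a / (2 * (- a EC))) *\<^sub>R D_unit \<alpha>"
proof -
  have "eventually (\<lambda>s. Phi_f \<gamma> (shift_var a \<alpha> s)
          = (Sigma_closed \<gamma> (shift_var a \<alpha> s) / (2 * (- a EC))) *\<^sub>R (Dpart a + s *\<^sub>R D_unit \<alpha>)) (nhds 0)"
    using eventually_closed_forms[OF \<gamma> C b, of \<alpha>] assms
    by (auto simp: Dpart_shift_var elim: eventually_mono)
  moreover have "((\<lambda>s. (Sigma_closed \<gamma> (shift_var a \<alpha> s) / (2 * (- a EC))) *\<^sub>R (Dpart a + s *\<^sub>R D_unit \<alpha>))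
      has_vector_derivative (Sigma_closed \<gamma> (shift_var a \<alpha> 0) / (2 * (- a EC))) *\<^sub>R (0 + 1 *\<^sub>R D_unit \<alpha>)
        + (pSigma \<gamma> \<alpha> a / (2 * (- a EC))) *\<^sub>R (Dpart a + 0 *\<^sub>R D_unit \<alpha>)) (at 0)"
    by (rule has_vector_derivative_scaleR)
       (use C in \<open>auto intro!: derivative_eq_intros Sigma_closed_has_derivative_pSigma\<close>)
  ultimately show ?thesis
    unfolding pPhi_def by (intro vector_derivative_at_eventually_eq) (simp_all add: add.commute)
qed

lemma pPhi_C:
  "pPhi \<gamma> EC a = (pSigma \<gamma> EC a / (2 * (- a EC)) + Sigma_closed \<gamma> a / (2 * (- a EC)\<^sup>2)) *\<^sub>R Dpart a"
proof -
  have "eventually (\<lambda>s. Phi_f \<gamma> (shift_var a EC s)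
          = (Sigma_closed \<gamma> (shift_var a EC s) / (2 * (- a EC - s))) *\<^sub>R Dpart a) (nhds 0)"
    using eventually_closed_forms[OF \<gamma> C b, of EC] by (auto simp: Dpart_shift_var elim: eventually_mono)
  moreover have "((\<lambda>s. Sigma_closed \<gamma> (shift_var a EC s) / (2 * (- a EC - s))) has_real_derivative
     (pSigma \<gamma> EC a / (2 * (- a EC)) + Sigma_closed \<gamma> a / (2 * (- a EC)\<^sup>2))) (at 0)"
    by (rule DERIV_cong[OF DERIV_divide[OF Sigma_closed_has_derivative_pSigma]])
       (use C in \<open>auto intro!: derivative_eq_intros simp: field_simps power2_eq_square\<close>)
  from has_vector_derivative_scaleR[OF this has_vector_derivative_const[of "Dpart a"]]
  have "((\<lambda>s. (Sigma_closed \<gamma> (shift_var a EC s) / (2 * (- a EC - s))) *\<^sub>R Dpart a) has_vector_derivative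
     (pSigma \<gamma> EC a / (2 * (- a EC)) + Sigma_closed \<gamma> a / (2 * (- a EC)\<^sup>2)) *\<^sub>R Dpart a) (at 0)"
    by simp
  ultimately show ?thesis
    unfolding pPhi_def by (intro vector_derivative_at_eventually_eq)
qed

end

section \<open>Densities and fluxes at the entropic variables\<close>

context
  fixes \<gamma> :: "nat \<Rightarrow> real" and \<rho> \<Theta> b :: real and u :: "real^'n::finite"
  assumes \<gamma>: "\<forall>m\<ge>1. \<gamma> m > 0" and \<rho>: "\<rho> > 0" and \<Theta>: "\<Theta> > 0" and b: "b \<in> interior (Sset \<gamma>)"
begin

lemma Avar_C: "(Avar \<gamma> \<rho> u \<Theta> b :: 'n eidx \<Rightarrow> real) EC = - 1 / (2 * \<Theta>)"
  by (simp add: Avar_def)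

lemma Avar_C_neg: "(Avar \<gamma> \<rho> u \<Theta> b :: 'n eidx \<Rightarrow> real) EC < 0"
  using \<Theta> by (simp add: Avar_C)

lemma Dpart_Avar: "Dpart (Avar \<gamma> \<rho> u \<Theta> b) = (1 / \<Theta>) *\<^sub>R u"
  by (simp add: Avar_def Dpart_def vec_eq_iff)

lemma beta_of_Avar: "beta_of (Avar \<gamma> \<rho> u \<Theta> b :: 'n eidx \<Rightarrow> real) = b"
  using \<Theta> by (simp add: beta_of_def Dpart_Avar Avar_C) (simp add: Avar_def power2_eq_square field_simps)

lemma beta_of_Avar_interior: "beta_of (Avar \<gamma> \<rho> u \<Theta> b :: 'n eidx \<Rightarrow> real) \<in> interior (Sset \<gamma>)"
  using b by (simp add: beta_of_Avar)

lemma gauss_factor_Avar: "gauss_factor (Avar \<gamma> \<rho> u \<Theta> b :: 'n eidx \<Rightarrow> real) = \<rho> / moment_series \<gamma> 2 b"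
proof -
  have pi_C: "pi / (- (Avar \<gamma> \<rho> u \<Theta> b :: 'n eidx \<Rightarrow> real) EC) = 2 * pi * \<Theta>"
    using \<Theta> by (simp add: Avar_C)
  have Z: "Zfun CARD('n) \<gamma> b \<Theta> = (2 * pi * \<Theta>) powr (real CARD('n) / 2) * moment_series \<gamma> 2 b"
    by (simp add: Zfun_def Wsum_eq_moment_series[OF \<gamma> b])
  have S2: "moment_series \<gamma> 2 b > 0" by (rule moment_series_pos[OF \<gamma> b])
  with \<Theta> have "Zfun CARD('n) \<gamma> b \<Theta> > 0" by (simp add: Z)
  with \<rho> have "exp ((Avar \<gamma> \<rho> u \<Theta> b :: 'n eidx \<Rightarrow> real) EA) = \<rho> / Zfun CARD('n) \<gamma> b \<Theta>"
    by (simp add: Avar_def)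
  then show ?thesis unfolding gauss_factor_def pi_C Z using \<Theta> S2 by (simp add: field_simps)
qed

lemma Sigma_closed_Avar: "Sigma_closed \<gamma> (Avar \<gamma> \<rho> u \<Theta> b :: 'n eidx \<Rightarrow> real) = \<rho> * avg \<gamma> b (\<lambda>m. 1 / real m)"
  unfolding Sigma_closed_def gauss_factor_Avar beta_of_Avar avg_inverse_eq_moment_series[OF \<gamma> b] by simp

lemma pSigma_Avar_A: "pSigma \<gamma> EA (Avar \<gamma> \<rho> u \<Theta> b) = \<rho> * avg \<gamma> b (\<lambda>m. 1 / real m)"
  using pSigma_A[OF \<gamma> Avar_C_neg beta_of_Avar_interior] Sigma_closed_Avar by simp

lemma pSigma_Avar_B: "pSigma \<gamma> EB (Avar \<gamma> \<rho> u \<Theta> b) = \<rho>"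
  using pSigma_B[OF \<gamma> Avar_C_neg beta_of_Avar_interior] gauss_factor_Avar beta_of_Avar moment_series_pos[OF \<gamma> b, of 2] by simp

lemma pSigma_Avar_D: "pSigma \<gamma> (EDi i) (Avar \<gamma> \<rho> u \<Theta> b) = \<rho> * u $ i"
  using pSigma_D[OF \<gamma> Avar_C_neg beta_of_Avar_interior] gauss_factor_Avar beta_of_Avar moment_series_pos[OF \<gamma> b, of 2] \<Theta>
  by (simp add: Dpart_Avar Avar_C)

lemma pSigma_Avar_C:
  "pSigma \<gamma> EC (Avar \<gamma> \<rho> u \<Theta> b) = \<rho> * (norm u)\<^sup>2 + real CARD('n) * \<rho> * \<Theta> * avg \<gamma> b (\<lambda>m. 1 / real m)"
proof -
  have "pSigma \<gamma> EC (Avar \<gamma> \<rho> u \<Theta> b) = (real CARD('n) / 2) * (2 * \<Theta>) * Sigma_closed \<gamma> (Avar \<gamma> \<rho> u \<Theta> b)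
          + \<rho> * ((norm ((1 / \<Theta>) *\<^sub>R u))\<^sup>2 * \<Theta>\<^sup>2)"
    using pSigma_C[OF \<gamma> Avar_C_neg beta_of_Avar_interior] gauss_factor_Avar beta_of_Avar moment_series_pos[OF \<gamma> b, of 2] \<Theta>
    by (simp add: Dpart_Avar Avar_C field_simps power2_eq_square)
  also have "(norm ((1 / \<Theta>) *\<^sub>R u))\<^sup>2 * \<Theta>\<^sup>2 = (norm u)\<^sup>2"
    using \<Theta> by (simp add: power_mult_distrib power_divide field_simps)
  finally show ?thesis unfolding Sigma_closed_Avar by (simp add: field_simps)
qed

lemma pPhi_Avar_A: "pPhi \<gamma> EA (Avar \<gamma> \<rho> u \<Theta> b) = (\<rho> * avg \<gamma> b (\<lambda>m. 1 / real m)) *\<^sub>R u"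
  using pPhi_eq[OF \<gamma> Avar_C_neg beta_of_Avar_interior, of EA] pSigma_Avar_A \<Theta> by (simp add: Dpart_Avar Avar_C)

lemma pPhi_Avar_B: "pPhi \<gamma> EB (Avar \<gamma> \<rho> u \<Theta> b) = \<rho> *\<^sub>R u"
  using pPhi_eq[OF \<gamma> Avar_C_neg beta_of_Avar_interior, of EB] pSigma_Avar_B \<Theta> by (simp add: Dpart_Avar Avar_C)

lemma pPhi_Avar_D:
  "pPhi \<gamma> (EDi i) (Avar \<gamma> \<rho> u \<Theta> b)
     = (\<rho> * u $ i) *\<^sub>R u + (\<rho> * \<Theta> * avg \<gamma> b (\<lambda>m. 1 / real m)) *\<^sub>R axis i 1"
  using pPhi_eq[OF \<gamma> Avar_C_neg beta_of_Avar_interior, of "EDi i"] pSigma_Avar_D Sigma_closed_Avar \<Theta> by (simp add: Dpart_Avar Avar_C)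

lemma pPhi_Avar_C:
  "pPhi \<gamma> EC (Avar \<gamma> \<rho> u \<Theta> b)
     = (\<rho> * (norm u)\<^sup>2) *\<^sub>R u + ((real CARD('n) + 2) * \<rho> * \<Theta> * avg \<gamma> b (\<lambda>m. 1 / real m)) *\<^sub>R u"
proof -
  have "pPhi \<gamma> EC (Avar \<gamma> \<rho> u \<Theta> b)
      = ((pSigma \<gamma> EC (Avar \<gamma> \<rho> u \<Theta> b) * \<Theta> + Sigma_closed \<gamma> (Avar \<gamma> \<rho> u \<Theta> b) * (2 * \<Theta>\<^sup>2)) / \<Theta>) *\<^sub>R u"
    using pPhi_C[OF \<gamma> Avar_C_neg beta_of_Avar_interior] \<Theta> by (simp add: Dpart_Avar Avar_C field_simps power2_eq_square)
  also have "\<dots> = (\<rho> * (norm u)\<^sup>2 + (real CARD('n) + 2) * \<rho> * \<Theta> * avg \<gamma> b (\<lambda>m. 1 / real m)) *\<^sub>R u"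
    by (rule arg_cong[where f="\<lambda>c. c *\<^sub>R u"])
       (unfold pSigma_Avar_C Sigma_closed_Avar, use \<Theta> in \<open>simp add: field_simps power2_eq_square\<close>)
  finally show ?thesis by (simp add: scaleR_add_left)
qed

end

section \<open>Partial derivatives of fields on an open set\<close>

text \<open>A field \<open>f t x\<close> is differentiated along the coordinate lines through \<open>(t, x)\<close>: the direction
  \<open>None\<close> is time, \<open>Some i\<close> is \<open>x\<^sub>i\<close>. \<open>C1_on\<close> and \<open>C2_on\<close> only require these partial
  derivatives (of order one, resp. two) to exist.\<close>

type_synonym 'n scalar_field = "real \<Rightarrow> real^'n \<Rightarrow> real"

definition dir_pt :: "real \<Rightarrow> real^('n::finite) \<Rightarrow> 'n option \<Rightarrow> real \<Rightarrow> real \<times> (real^'n)" where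
  "dir_pt t x k s = (case k of None \<Rightarrow> (t + s, x) | Some i \<Rightarrow> (t, x + s *\<^sub>R axis i 1))"

definition along :: "('n::finite) scalar_field \<Rightarrow> real \<Rightarrow> real^'n \<Rightarrow> 'n option \<Rightarrow> real \<Rightarrow> real" where
  "along f t x k s = case_prod f (dir_pt t x k s)"

definition pd :: "'n option \<Rightarrow> ('n::finite) scalar_field \<Rightarrow> 'n scalar_field" where
  "pd k f t x = deriv (along f t x k) 0"

definition C1_on :: "(real \<times> (real^'n)) set \<Rightarrow> ('n::finite) scalar_field \<Rightarrow> bool" where
  "C1_on U f \<longleftrightarrow> (\<forall>t x k. (t, x) \<in> U \<longrightarrow> (along f t x k has_real_derivative pd k f t x) (at 0))"

definition C2_on :: "(real \<times> (real^'n)) set \<Rightarrow> ('n::finite) scalar_field \<Rightarrow> bool" where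
  "C2_on U f \<longleftrightarrow> C1_on U f \<and> (\<forall>k. C1_on U (pd k f))"

lemma dir_pt_0 [simp]: "dir_pt t x k 0 = (t, x)"
  by (cases k) (auto simp: dir_pt_def)

lemma along_0 [simp]: "along f t x k 0 = f t x"
  by (simp add: along_def)

lemma along_const [simp]: "along (\<lambda>t x. c) t x k = (\<lambda>s. c)"
  by (simp add: along_def fun_eq_iff split: prod.splits)

lemma along_comp: "along (\<lambda>t x. h (f t x)) t x k = (\<lambda>s. h (along f t x k s))"
  by (simp add: along_def fun_eq_iff split: prod.splits)

lemma along_comp2: "along (\<lambda>t x. h (f t x) (g t x)) t x k = (\<lambda>s. h (along f t x k s) (along g t x k s))"
  by (simp add: along_def fun_eq_iff split: prod.splits)

lemma pdt_eq_pd: "pdt f t x = pd None f t x"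
proof -
  have "((\<lambda>s. f s x) has_field_derivative D) (at t) \<longleftrightarrow> (along f t x None has_field_derivative D) (at 0)" for D
  proof -
    have "along f t x None = (\<lambda>s. f (s + t) x)" by (auto simp: along_def dir_pt_def add.commute)
    then show ?thesis using DERIV_shift[of "\<lambda>s. f s x" D 0 t] by simp
  qed
  then show ?thesis by (simp add: pdt_def pd_def deriv_def)
qed

lemma pdx_eq_pd: "pdx i f t x = pd (Some i) f t x"
proof -
  have "along f t x (Some i) = (\<lambda>s. f t (x + s *\<^sub>R axis i 1))"
    by (simp add: along_def dir_pt_def fun_eq_iff)
  then show ?thesis by (simp add: pdx_def pd_def)
qed

lemma eventually_dir_pt_in_open:
  assumes "open U" "(t, x) \<in> U"
  shows "eventually (\<lambda>s. dir_pt t x k s \<in> U) (nhds 0)"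
proof (rule eventually_nhds_isCont_in_open)
  show "isCont (dir_pt t x k) 0"
    by (cases k) (auto simp: dir_pt_def [abs_def] intro!: continuous_intros)
qed (use assms in simp_all)

lemma eventually_along_eq:
  assumes "open U" "(t, x) \<in> U" "\<forall>(t, x)\<in>U. f t x = g t x"
  shows "eventually (\<lambda>s. along f t x k s = along g t x k s) (nhds 0)"
  using eventually_dir_pt_in_open[OF assms(1,2), of k]
  by (rule eventually_mono) (use assms(3) in \<open>auto simp: along_def\<close>)

lemma pd_cong_on:
  assumes "open U" "(t, x) \<in> U" "\<forall>(t, x)\<in>U. f t x = g t x"
  shows "pd k f t x = pd k g t x"
  unfolding pd_def by (rule deriv_cong_ev[OF eventually_along_eq[OF assms]]) simp

lemma C1_on_cong:
  assumes "open U" "C1_on U f" "\<forall>(t, x)\<in>U. f t x = g t x"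
  shows "C1_on U g"
  unfolding C1_on_def
proof (intro allI impI)
  fix t x k assume tx: "(t, x) \<in> U"
  have "(along f t x k has_real_derivative pd k f t x) (at 0)" using assms(2) tx by (auto simp: C1_on_def)
  then show "(along g t x k has_real_derivative pd k g t x) (at 0)"
    using DERIV_cong_ev[OF refl eventually_along_eq[OF assms(1) tx assms(3), of k]
        pd_cong_on[OF assms(1) tx assms(3)]]
    by simp
qed

lemma C1_onD: "C1_on U f \<Longrightarrow> (t, x) \<in> U \<Longrightarrow> (along f t x k has_real_derivative pd k f t x) (at 0)"
  by (auto simp: C1_on_def)

lemma C1_onI:
  assumes "\<And>t x k. (t, x) \<in> U \<Longrightarrow> (along f t x k has_real_derivative D t x k) (at 0)"
  shows "C1_on U f" and "\<And>t x k. (t, x) \<in> U \<Longrightarrow> pd k f t x = D t x k"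
proof -
  show pd_eq: "pd k f t x = D t x k" if "(t, x) \<in> U" for t x k
    unfolding pd_def using assms[OF that] by (rule DERIV_imp_deriv)
  show "C1_on U f" using assms by (auto simp: C1_on_def pd_eq)
qed

lemma C1_on_const: "C1_on U (\<lambda>t x. c)" and pd_const [simp]: "pd k (\<lambda>t x. c) t x = 0"
  by (auto simp: C1_on_def pd_def)

lemma C1_on_add:
  assumes "C1_on U f" "C1_on U g"
  shows "C1_on U (\<lambda>t x. f t x + g t x)"
    and "(t, x) \<in> U \<Longrightarrow> pd k (\<lambda>t x. f t x + g t x) t x = pd k f t x + pd k g t x"
proof -
  have *: "(along (\<lambda>t x. f t x + g t x) t x k has_real_derivative pd k f t x + pd k g t x) (at 0)"
    if "(t, x) \<in> U" for t x k
    unfolding along_comp2[where h="(+)"] using C1_onD[OF assms(1) that] C1_onD[OF assms(2) that]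
    by (rule DERIV_add)
  show "C1_on U (\<lambda>t x. f t x + g t x)" by (rule C1_onI(1)[OF *])
  show "(t, x) \<in> U \<Longrightarrow> pd k (\<lambda>t x. f t x + g t x) t x = pd k f t x + pd k g t x" by (rule C1_onI(2)[OF *])
qed

lemma C1_on_diff:
  assumes "C1_on U f" "C1_on U g"
  shows "C1_on U (\<lambda>t x. f t x - g t x)"
    and "(t, x) \<in> U \<Longrightarrow> pd k (\<lambda>t x. f t x - g t x) t x = pd k f t x - pd k g t x"
proof -
  have *: "(along (\<lambda>t x. f t x - g t x) t x k has_real_derivative pd k f t x - pd k g t x) (at 0)"
    if "(t, x) \<in> U" for t x k
    unfolding along_comp2[where h="(-)"] using C1_onD[OF assms(1) that] C1_onD[OF assms(2) that]
    by (rule DERIV_diff)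
  show "C1_on U (\<lambda>t x. f t x - g t x)" by (rule C1_onI(1)[OF *])
  show "(t, x) \<in> U \<Longrightarrow> pd k (\<lambda>t x. f t x - g t x) t x = pd k f t x - pd k g t x" by (rule C1_onI(2)[OF *])
qed

lemma C1_on_mult:
  assumes "C1_on U f" "C1_on U g"
  shows "C1_on U (\<lambda>t x. f t x * g t x)"
    and "(t, x) \<in> U \<Longrightarrow> pd k (\<lambda>t x. f t x * g t x) t x = pd k f t x * g t x + f t x * pd k g t x"
proof -
  have *: "(along (\<lambda>t x. f t x * g t x) t x k has_real_derivative pd k f t x * g t x + f t x * pd k g t x) (at 0)"
    if "(t, x) \<in> U" for t x k
    unfolding along_comp2[where h="(*)"]
    using DERIV_mult[OF C1_onD[OF assms(1) that] C1_onD[OF assms(2) that]] by (simp add: mult.commute)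
  show "C1_on U (\<lambda>t x. f t x * g t x)" by (rule C1_onI(1)[OF *])
  show "(t, x) \<in> U \<Longrightarrow> pd k (\<lambda>t x. f t x * g t x) t x = pd k f t x * g t x + f t x * pd k g t x"
    by (rule C1_onI(2)[OF *])
qed

lemma C1_on_comp:
  assumes "C1_on U f" "\<And>t x. (t, x) \<in> U \<Longrightarrow> (h has_real_derivative h' (f t x)) (at (f t x))"
  shows "C1_on U (\<lambda>t x. h (f t x))"
    and "(t, x) \<in> U \<Longrightarrow> pd k (\<lambda>t x. h (f t x)) t x = h' (f t x) * pd k f t x"
proof -
  have *: "(along (\<lambda>t x. h (f t x)) t x k has_real_derivative h' (f t x) * pd k f t x) (at 0)"
    if "(t, x) \<in> U" for t x k
    unfolding along_comp using DERIV_chain2[OF _ C1_onD[OF assms(1) that]] assms(2)[OF that] by simp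
  show "C1_on U (\<lambda>t x. h (f t x))" by (rule C1_onI(1)[OF *])
  show "(t, x) \<in> U \<Longrightarrow> pd k (\<lambda>t x. h (f t x)) t x = h' (f t x) * pd k f t x" by (rule C1_onI(2)[OF *])
qed

lemma C1_on_sum:
  assumes "finite I" "\<And>i. i \<in> I \<Longrightarrow> C1_on U (f i)"
  shows "C1_on U (\<lambda>t x. \<Sum>i\<in>I. f i t x)"
    and "(t, x) \<in> U \<Longrightarrow> pd k (\<lambda>t x. \<Sum>i\<in>I. f i t x) t x = (\<Sum>i\<in>I. pd k (f i) t x)"
proof -
  have *: "(along (\<lambda>t x. \<Sum>i\<in>I. f i t x) t x k has_real_derivative (\<Sum>i\<in>I. pd k (f i) t x)) (at 0)"
    if "(t, x) \<in> U" for t x k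
  proof -
    have "along (\<lambda>t x. \<Sum>i\<in>I. f i t x) t x k = (\<lambda>s. \<Sum>i\<in>I. along (f i) t x k s)"
      by (simp add: along_def fun_eq_iff split: prod.splits)
    then show ?thesis by (simp only:) (rule DERIV_sum, use C1_onD[OF assms(2) that] in auto)
  qed
  show "C1_on U (\<lambda>t x. \<Sum>i\<in>I. f i t x)" by (rule C1_onI(1)[OF *])
  show "(t, x) \<in> U \<Longrightarrow> pd k (\<lambda>t x. \<Sum>i\<in>I. f i t x) t x = (\<Sum>i\<in>I. pd k (f i) t x)" by (rule C1_onI(2)[OF *])
qed

lemma C2_on_imp_C1_on: "C2_on U f \<Longrightarrow> C1_on U f"
  and C2_on_imp_C1_on_pd: "C2_on U f \<Longrightarrow> C1_on U (pd k f)"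
  by (auto simp: C2_on_def)

lemma C2_on_cong:
  assumes "open U" "C2_on U f" "\<forall>(t, x)\<in>U. f t x = g t x"
  shows "C2_on U g"
  unfolding C2_on_def
proof (intro conjI allI)
  show "C1_on U g" by (rule C1_on_cong[OF assms(1) C2_on_imp_C1_on[OF assms(2)] assms(3)])
  show "C1_on U (pd k g)" for k
    by (rule C1_on_cong[OF assms(1) C2_on_imp_C1_on_pd[OF assms(2)]])
       (use pd_cong_on[OF assms(1) _ assms(3)] in auto)
qed

lemma C2_on_const: "C2_on U (\<lambda>t x. c)"
proof -
  have pd_c: "pd k (\<lambda>t x. c) = (\<lambda>t x. 0)" for k by (simp add: fun_eq_iff)
  show ?thesis by (simp only: C2_on_def pd_c) (simp add: C1_on_const)
qed

lemma C2_on_add: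
  assumes "open U" "C2_on U f" "C2_on U g"
  shows "C2_on U (\<lambda>t x. f t x + g t x)"
  unfolding C2_on_def
proof (intro conjI allI)
  note f = C2_on_imp_C1_on[OF assms(2)] and g = C2_on_imp_C1_on[OF assms(3)]
  show "C1_on U (\<lambda>t x. f t x + g t x)" by (rule C1_on_add(1)[OF f g])
  show "C1_on U (pd k (\<lambda>t x. f t x + g t x))" for k
    by (rule C1_on_cong[OF assms(1) C1_on_add(1)[OF C2_on_imp_C1_on_pd[OF assms(2)] C2_on_imp_C1_on_pd[OF assms(3)]]])
       (use C1_on_add(2)[OF f g] in auto)
qed

lemma C2_on_diff:
  assumes "open U" "C2_on U f" "C2_on U g"
  shows "C2_on U (\<lambda>t x. f t x - g t x)"
  unfolding C2_on_def
proof (intro conjI allI)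
  note f = C2_on_imp_C1_on[OF assms(2)] and g = C2_on_imp_C1_on[OF assms(3)]
  show "C1_on U (\<lambda>t x. f t x - g t x)" by (rule C1_on_diff(1)[OF f g])
  show "C1_on U (pd k (\<lambda>t x. f t x - g t x))" for k
    by (rule C1_on_cong[OF assms(1) C1_on_diff(1)[OF C2_on_imp_C1_on_pd[OF assms(2)] C2_on_imp_C1_on_pd[OF assms(3)]]])
       (use C1_on_diff(2)[OF f g] in auto)
qed

lemma C2_on_mult:
  assumes "open U" "C2_on U f" "C2_on U g"
  shows "C2_on U (\<lambda>t x. f t x * g t x)"
  unfolding C2_on_def
proof (intro conjI allI)
  note f = C2_on_imp_C1_on[OF assms(2)] and g = C2_on_imp_C1_on[OF assms(3)]
  show "C1_on U (\<lambda>t x. f t x * g t x)" by (rule C1_on_mult(1)[OF f g])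
  show "C1_on U (pd k (\<lambda>t x. f t x * g t x))" for k
    by (rule C1_on_cong[OF assms(1) C1_on_add(1)[OF C1_on_mult(1)[OF C2_on_imp_C1_on_pd[OF assms(2)] g]
                                                  C1_on_mult(1)[OF f C2_on_imp_C1_on_pd[OF assms(3)]]]])
       (use C1_on_mult(2)[OF f g] in auto)
qed

lemma C2_on_comp:
  assumes "open U" "C2_on U f"
    and h: "\<And>t x. (t, x) \<in> U \<Longrightarrow> (h has_real_derivative h' (f t x)) (at (f t x))"
    and h': "\<And>t x. (t, x) \<in> U \<Longrightarrow> (h' has_real_derivative h'' (f t x)) (at (f t x))"
  shows "C2_on U (\<lambda>t x. h (f t x))"
  unfolding C2_on_def
proof (intro conjI allI)
  note f = C2_on_imp_C1_on[OF assms(2)]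
  show "C1_on U (\<lambda>t x. h (f t x))" by (rule C1_on_comp(1)[OF f h])
  show "C1_on U (pd k (\<lambda>t x. h (f t x)))" for k
    by (rule C1_on_cong[OF assms(1) C1_on_mult(1)[OF C1_on_comp(1)[OF f h'] C2_on_imp_C1_on_pd[OF assms(2)]]])
       (use C1_on_comp(2)[OF f h] in auto)
qed

lemma C1_pdx: "C2_on U f \<Longrightarrow> C1_on U (\<lambda>t x. pdx k f t x)"
  unfolding pdx_eq_pd by (rule C2_on_imp_C1_on_pd)

definition dir_vec :: "('n::finite) option \<Rightarrow> real \<times> (real^'n)" where
  "dir_vec k = (case k of None \<Rightarrow> (1, 0) | Some i \<Rightarrow> (0, axis i 1))"

lemma dir_vec_in_Basis: "dir_vec k \<in> Basis"
  by (cases k) (auto simp: dir_vec_def Basis_prod_def Basis_vec_def)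

lemma along_eq_dirD_line: "along f t x k = (\<lambda>s. (\<lambda>(t, x). f t x) ((t, x) + s *\<^sub>R dir_vec k))"
  by (cases k) (auto simp: along_def dir_pt_def dir_vec_def fun_eq_iff)

lemma dirD_dir_vec: "dirD (dir_vec k) (\<lambda>(t, x). f t x) = (\<lambda>(t, x). pd k f t x)"
  by (simp add: fun_eq_iff dirD_def pd_def along_eq_dirD_line)

lemma smooth_on_imp_C2_on:
  assumes sm: "smooth_on U (\<lambda>(t, x). f t x)"
  shows "C2_on U f"
proof -
  have diff0: "(\<lambda>s. (\<lambda>(t, x). f t x) (p + s *\<^sub>R v)) differentiable (at 0)"
    if "v \<in> Basis" "p \<in> U" for v p
    using sm[unfolded smooth_on_def, rule_format, of "[]"] that by simp
  have diff1: "(\<lambda>s. dirD w (\<lambda>(t, x). f t x) (p + s *\<^sub>R v)) differentiable (at 0)"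
    if "w \<in> Basis" "v \<in> Basis" "p \<in> U" for w v p
    using sm[unfolded smooth_on_def, rule_format, of "[w]"] that by simp
  have "C1_on U f"
    unfolding C1_on_def pd_def
  proof (intro allI impI)
    fix t x k assume "(t, x) \<in> U"
    then have "along f t x k differentiable (at 0)" unfolding along_eq_dirD_line by (intro diff0 dir_vec_in_Basis)
    then show "(along f t x k has_real_derivative deriv (along f t x k) 0) (at 0)"
      by (simp add: DERIV_deriv_iff_real_differentiable)
  qed
  moreover have "C1_on U (pd k f)" for k
    unfolding C1_on_def
  proof (intro allI impI)
    fix t x k' assume "(t, x) \<in> U"
    then have "(\<lambda>s. dirD (dir_vec k) (\<lambda>(t, x). f t x) ((t, x) + s *\<^sub>R dir_vec k')) differentiable (at 0)"
      by (intro diff1 dir_vec_in_Basis)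
    then have "along (pd k f) t x k' differentiable (at 0)"
      unfolding dirD_dir_vec along_eq_dirD_line by simp
    then show "(along (pd k f) t x k' has_real_derivative pd k' (pd k f) t x) (at 0)"
      by (simp add: pd_def DERIV_deriv_iff_real_differentiable)
  qed
  ultimately show ?thesis by (simp add: C2_on_def)
qed

lemma C2_on_ln:
  assumes "open U" "C2_on U f" "\<And>t x. (t, x) \<in> U \<Longrightarrow> f t x > 0"
  shows "C2_on U (\<lambda>t x. ln (f t x))"
    and "(t, x) \<in> U \<Longrightarrow> pd k (\<lambda>t x. ln (f t x)) t x = pd k f t x / f t x"
proof -
  have ln': "(ln has_real_derivative 1 / y) (at y)" and inv': "((\<lambda>y. 1 / y) has_real_derivative - (1 / y\<^sup>2)) (at y)"
    if "y > 0" for y :: real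
    using that by (auto intro!: derivative_eq_intros simp: power2_eq_square field_simps)
  show "C2_on U (\<lambda>t x. ln (f t x))"
    by (rule C2_on_comp[OF assms(1,2), where h'="\<lambda>y. 1 / y" and h''="\<lambda>y. - (1 / y\<^sup>2)"])
       (auto intro: ln' inv' assms(3))
  show "(t, x) \<in> U \<Longrightarrow> pd k (\<lambda>t x. ln (f t x)) t x = pd k f t x / f t x"
    using C1_on_comp(2)[OF C2_on_imp_C1_on[OF assms(2)], where h=ln and h'="\<lambda>y. 1 / y"] ln' assms(3)
    by auto
qed

lemma C2_on_inverse:
  assumes "open U" "C2_on U f" "\<And>t x. (t, x) \<in> U \<Longrightarrow> f t x > 0"
  shows "C2_on U (\<lambda>t x. 1 / f t x)"
    and "(t, x) \<in> U \<Longrightarrow> pd k (\<lambda>t x. 1 / f t x) t x = - pd k f t x / (f t x)\<^sup>2"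
proof -
  have inv': "((\<lambda>y. 1 / y) has_real_derivative - (1 / y\<^sup>2)) (at y)"
    and inv'': "((\<lambda>y. - (1 / y\<^sup>2)) has_real_derivative 2 / y ^ 3) (at y)"
    if "y > 0" for y :: real
    using that by (auto intro!: derivative_eq_intros simp: power2_eq_square power3_eq_cube field_simps)
  show "C2_on U (\<lambda>t x. 1 / f t x)"
    by (rule C2_on_comp[OF assms(1,2), where h'="\<lambda>y. - (1 / y\<^sup>2)" and h''="\<lambda>y. 2 / y ^ 3"])
       (auto intro: inv' inv'' assms(3))
  show "(t, x) \<in> U \<Longrightarrow> pd k (\<lambda>t x. 1 / f t x) t x = - pd k f t x / (f t x)\<^sup>2"
    using C1_on_comp(2)[OF C2_on_imp_C1_on[OF assms(2)], where h="\<lambda>y. 1 / y" and h'="\<lambda>y. - (1 / y\<^sup>2)"]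
      inv' assms(3)
    by auto
qed

lemma pdt_cong_on: "open U \<Longrightarrow> (t, x) \<in> U \<Longrightarrow> \<forall>(t, x)\<in>U. f t x = g t x \<Longrightarrow> pdt f t x = pdt g t x"
  unfolding pdt_eq_pd by (rule pd_cong_on)

lemma pdx_cong_on: "open U \<Longrightarrow> (t, x) \<in> U \<Longrightarrow> \<forall>(t, x)\<in>U. f t x = g t x \<Longrightarrow> pdx i f t x = pdx i g t x"
  unfolding pdx_eq_pd by (rule pd_cong_on)

lemma divg_cong_on: "open U \<Longrightarrow> (t, x) \<in> U \<Longrightarrow> \<forall>(t, x)\<in>U. F t x = G t x \<Longrightarrow> divg F t x = divg G t x"
  unfolding divg_def by (intro sum.cong refl pdx_cong_on) auto

lemma pdx_cmult: "C1_on U f \<Longrightarrow> (t, x) \<in> U \<Longrightarrow> pdx i (\<lambda>t x. c * f t x) t x = c * pdx i f t x"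
  unfolding pdx_eq_pd by (simp add: C1_on_mult(2)[OF C1_on_const])

lemma pdx_add:
  "C1_on U f \<Longrightarrow> C1_on U g \<Longrightarrow> (t, x) \<in> U \<Longrightarrow> pdx i (\<lambda>t x. f t x + g t x) t x = pdx i f t x + pdx i g t x"
  unfolding pdx_eq_pd by (rule C1_on_add(2))

lemma divg_scaleR:
  assumes "\<And>k. C1_on U (\<lambda>t x. F t x $ k)" "(t, x) \<in> U"
  shows "divg (\<lambda>t x. c *\<^sub>R F t x) t x = c * divg F t x"
proof -
  have "divg (\<lambda>t x. c *\<^sub>R F t x) t x = (\<Sum>i\<in>UNIV. pdx i (\<lambda>t x. c * F t x $ i) t x)"
    by (simp add: divg_def)
  also have "\<dots> = (\<Sum>i\<in>UNIV. c * pdx i (\<lambda>t x. F t x $ i) t x)"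
    by (rule sum.cong[OF refl], rule pdx_cmult[OF assms])
  finally show ?thesis by (simp add: divg_def sum_distrib_left)
qed

lemma divg_zero: "divg (\<lambda>t x. 0) t x = 0"
  by (simp add: divg_def pdx_def)

section \<open>The diffusion matrix applied to gradients\<close>

lemma sum_UNIV_eidx:
  "(\<Sum>b\<in>(UNIV::('n::finite) eidx set). F b) = (\<Sum>j\<in>UNIV. F (EDi j)) + F EA + F EB + F EC"
proof -
  have "(\<Sum>b\<in>(UNIV::'n eidx set). F b) = (\<Sum>b\<in>range EDi. F b) + (\<Sum>b\<in>{EA, EB, EC}. F b)"
    unfolding UNIV_eidx by (rule sum.union_disjoint) auto
  also have "(\<Sum>b\<in>range EDi. F b) = (\<Sum>j\<in>UNIV. F (EDi j))"
    by (rule sum.reindex_cong[where l=EDi]) (auto simp: inj_def)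
  finally show ?thesis by (simp add: add.assoc)
qed

lemma all_eidx: "(\<forall>\<alpha>::('n::finite) eidx. P \<alpha>) \<longleftrightarrow> (\<forall>i. P (EDi i)) \<and> P EA \<and> P EB \<and> P EC"
  by (metis eidx.exhaust)

lemma outer_mult_vec: "outer a b *v w = (b \<bullet> w) *\<^sub>R a"
  by (simp add: vec_eq_iff outer_def matrix_vector_mult_def inner_vec_def sum_distrib_left mult_ac)

lemma transpose_outer: "transpose (outer a b) = outer b a"
  by (simp add: vec_eq_iff outer_def transpose_def)

lemma scaleR_matrix_vector_mult: "(c *\<^sub>R M) *v w = c *\<^sub>R (M *v (w::real^'n::finite))"
  by (simp add: vec_eq_iff matrix_vector_mult_def sum_distrib_left mult_ac)

lemma transpose_add: "transpose (M + N) = transpose M + transpose (N::'a::ring_1^'n^'n)"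
  and transpose_diff: "transpose (M - N) = transpose M - transpose (N::'a^'n^'n)"
  and transpose_zero: "transpose (0::'a^'n^'n) = 0"
  by (simp_all add: vec_eq_iff transpose_def)

lemmas block_mult_simps = outer_mult_vec transpose_outer scaleR_matrix_vector_mult transpose_scalar
  transpose_add transpose_diff matrix_vector_mult_add_rdistrib matrix_vector_mult_diff_rdistrib
  matrix_vector_mul_lid inner_axis inner_axis'

lemma Xblk_symmetric: "Xblk \<epsilon> \<mu> \<nu> \<kappa> \<Theta> (u::real^'n::finite) \<alpha> \<beta> = transpose (Xblk \<epsilon> \<mu> \<nu> \<kappa> \<Theta> u \<beta> \<alpha>)"
  by (cases \<alpha>; cases \<beta>) (auto simp: Xblk_def block_mult_simps transpose_zero)

definition sigma_of :: "real^'n^'n \<Rightarrow> real^'n^'n" where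
  "sigma_of Du = Du + transpose Du - ((2 / real CARD('n)) * (\<Sum>j\<in>UNIV. Du $ j $ j)) *\<^sub>R mat 1"

lemma sigma_of_nth:
  "sigma_of (Du::real^('n::finite)^'n) $ i $ k
     = Du $ i $ k + Du $ k $ i - (if i = k then (2 / real CARD('n)) * (\<Sum>j\<in>UNIV. Du $ j $ j) else 0)"
  by (simp add: sigma_of_def transpose_def mat_def)

lemma sigma_of_jac: "sigma_of (jac u t x) = Defs.sigma u t x"
  by (simp add: sigma_of_def Defs.sigma_def divg_def jac_def)

lemma sigma_nth:
  fixes u :: "real \<Rightarrow> real^'n::finite \<Rightarrow> real^'n"
  shows "Defs.sigma u t x $ i $ k = pdx k (\<lambda>t x. u t x $ i) t x + pdx i (\<lambda>t x. u t x $ k) t x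
           - (if i = k then 2 / real CARD('n) else 0) * (\<Sum>j\<in>UNIV. pdx j (\<lambda>t x. u t x $ j) t x)"
  by (simp add: Defs.sigma_def jac_def transpose_def mat_def divg_def)

lemma sigma_of_mult_vec_nth:
  "(sigma_of Du *v w) $ k = (\<Sum>j\<in>UNIV. w $ j * Du $ k $ j) + (\<Sum>j\<in>UNIV. w $ j * Du $ j $ k)
      - (2 / real CARD('n)) * (\<Sum>j\<in>UNIV. Du $ j $ j) * w $ k"
  for Du :: "real^('n::finite)^'n"
proof -
  have "(sigma_of Du *v w) $ k = (\<Sum>j\<in>UNIV. Du $ k $ j * w $ j + Du $ j $ k * w $ j
          - (if k = j then (2 / real CARD('n)) * (\<Sum>j\<in>UNIV. Du $ j $ j) * w $ j else 0))"
    by (simp add: matrix_vector_mult_def sigma_of_nth left_diff_distrib distrib_right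
        if_distrib[where f="\<lambda>x. x * _"] cong: if_cong)
  then show ?thesis by (simp add: sum_subtractf sum.distrib mult_ac)
qed

lemma sum_scaleR_axis: "(\<Sum>j\<in>UNIV. c j *\<^sub>R axis j (1::real)) = (\<chi> k. c k)"
  by (simp add: vec_eq_iff axis_def if_distrib[where f="\<lambda>x. _ * x"] cong: if_cong)

text \<open>In each row, \<open>g \<beta>'\<close> stands for \<open>\<nabla>\<A>\<^sup>\<beta>\<^sup>'\<close>; the hypotheses are the chain rule for
  \<open>D = u/\<Theta>\<close> and \<open>C = -1/(2\<Theta>)\<close>, and the identity \<open>\<nabla>A + (n+2)\<Theta>\<nabla>C = \<nabla>\<chi>\<close>.\<close>

lemma Xblk_row_A:
  fixes g :: "('n::finite) eidx \<Rightarrow> real^'n"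
  assumes "g EA + ((real CARD('n) + 2) * \<Theta>) *\<^sub>R g EC = g\<chi>"
  shows "(\<Sum>\<beta>'\<in>UNIV. Xblk \<epsilon> \<mu> \<nu> \<kappa> \<Theta> u EA \<beta>' *v g \<beta>') = \<epsilon> *\<^sub>R (\<nu> *\<^sub>R g\<chi>)"
proof -
  have "(\<Sum>\<beta>'\<in>UNIV. Xblk \<epsilon> \<mu> \<nu> \<kappa> \<Theta> u EA \<beta>' *v g \<beta>')
      = \<epsilon> *\<^sub>R (\<nu> *\<^sub>R (g EA + ((real CARD('n) + 2) * \<Theta>) *\<^sub>R g EC))"
    by (simp add: sum_UNIV_eidx Xblk_def block_mult_simps scaleR_add_right mult_ac)
  then show ?thesis using assms by simp
qed

lemma Xblk_row_B: "(\<Sum>\<beta>'\<in>UNIV. Xblk \<epsilon> \<mu> \<nu> \<kappa> \<Theta> u EB \<beta>' *v g \<beta>') = 0"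
  by (simp add: Xblk_def)

lemma Xblk_row_D_D_part:
  fixes w :: "('n::finite) \<Rightarrow> real^'n"
  shows "(\<Sum>j\<in>UNIV. Xblk \<epsilon> \<mu> \<nu> \<kappa> \<Theta> u (EDi i) (EDi j) *v w j)
     = (\<epsilon> * \<mu> * \<Theta>) *\<^sub>R (w i + (\<chi> k. w k $ i) - ((2 / real CARD('n)) * (\<Sum>j\<in>UNIV. w j $ j)) *\<^sub>R axis i 1)"
proof -
  have "(\<Sum>j\<in>UNIV. Xblk \<epsilon> \<mu> \<nu> \<kappa> \<Theta> u (EDi i) (EDi j) *v w j)
      = (\<Sum>j\<in>UNIV. (\<epsilon> * \<mu> * \<Theta>) *\<^sub>R ((if i = j then w j else 0) + (w j $ i) *\<^sub>R axis j 1
                                      - ((2 / real CARD('n)) * w j $ j) *\<^sub>R axis i 1))"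
    by (intro sum.cong refl) (simp add: Xblk_def block_mult_simps)
  also have "\<dots> = (\<epsilon> * \<mu> * \<Theta>) *\<^sub>R ((\<Sum>j\<in>UNIV. (if i = j then w j else 0)) + (\<Sum>j\<in>UNIV. (w j $ i) *\<^sub>R axis j 1)
                      - (\<Sum>j\<in>UNIV. ((2 / real CARD('n)) * w j $ j) *\<^sub>R axis i 1))"
    by (simp add: scaleR_sum_right[symmetric] sum.distrib sum_subtractf)
  also have "\<dots> = (\<epsilon> * \<mu> * \<Theta>) *\<^sub>R (w i + (\<chi> k. w k $ i) - ((2 / real CARD('n)) * (\<Sum>j\<in>UNIV. w j $ j)) *\<^sub>R axis i 1)"
    by (simp add: sum_scaleR_axis scaleR_sum_left[symmetric] sum_distrib_left)
  finally show ?thesis .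
qed

lemma Xblk_row_D:
  fixes g :: "('n::finite) eidx \<Rightarrow> real^'n"
  assumes \<Theta>: "\<Theta> > 0"
    and gD: "\<And>j k. g (EDi j) $ k = Du $ j $ k / \<Theta> - u $ j * g\<Theta> $ k / \<Theta>\<^sup>2"
    and gC: "g EC = (1 / (2 * \<Theta>\<^sup>2)) *\<^sub>R g\<Theta>"
  shows "(\<Sum>\<beta>'\<in>UNIV. Xblk \<epsilon> \<mu> \<nu> \<kappa> \<Theta> u (EDi i) \<beta>' *v g \<beta>') = \<epsilon> *\<^sub>R (\<chi> k. \<mu> * sigma_of Du $ i $ k)"
proof -
  have trace: "(\<Sum>j\<in>UNIV. g (EDi j) $ j) = (\<Sum>j\<in>UNIV. Du $ j $ j) / \<Theta> - (u \<bullet> g\<Theta>) / \<Theta>\<^sup>2"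
    by (simp add: gD sum_subtractf sum_divide_distrib inner_vec_def)
  have "(\<Sum>\<beta>'\<in>UNIV. Xblk \<epsilon> \<mu> \<nu> \<kappa> \<Theta> u (EDi i) \<beta>' *v g \<beta>')
     = (\<Sum>j\<in>UNIV. Xblk \<epsilon> \<mu> \<nu> \<kappa> \<Theta> u (EDi i) (EDi j) *v g (EDi j)) + XDC \<epsilon> \<mu> \<Theta> u i *v g EC"
    by (simp add: sum_UNIV_eidx Xblk_def)
  also have "\<dots> = (\<epsilon> * \<mu> * \<Theta>) *\<^sub>R (g (EDi i) + (\<chi> k. g (EDi k) $ i)
                       - ((2 / real CARD('n)) * (\<Sum>j\<in>UNIV. g (EDi j) $ j)) *\<^sub>R axis i 1)
       + (2 * \<epsilon> * \<mu> * \<Theta>) *\<^sub>R ((u $ i) *\<^sub>R g EC + (g EC $ i) *\<^sub>R u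
                       - (2 / real CARD('n) * (u \<bullet> g EC)) *\<^sub>R axis i 1)"
    unfolding Xblk_row_D_D_part by (simp add: XDC_def block_mult_simps)
  also have "\<dots> = \<epsilon> *\<^sub>R (\<chi> k. \<mu> * sigma_of Du $ i $ k)"
    unfolding trace vec_eq_iff using \<Theta>
    by (simp add: gD gC sigma_of_nth axis_def field_simps power2_eq_square)
  finally show ?thesis .
qed

lemma Xblk_row_C_D_part:
  fixes w :: "('n::finite) \<Rightarrow> real^'n"
  shows "(\<Sum>j\<in>UNIV. Xblk \<epsilon> \<mu> \<nu> \<kappa> \<Theta> u EC (EDi j) *v w j)
     = (2 * \<epsilon> * \<mu> * \<Theta>) *\<^sub>R ((\<Sum>j\<in>UNIV. (u $ j) *\<^sub>R w j) + (\<chi> k. u \<bullet> w k)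
                            - ((2 / real CARD('n)) * (\<Sum>j\<in>UNIV. w j $ j)) *\<^sub>R u)"
proof -
  have "(\<Sum>j\<in>UNIV. Xblk \<epsilon> \<mu> \<nu> \<kappa> \<Theta> u EC (EDi j) *v w j)
      = (\<Sum>j\<in>UNIV. (2 * \<epsilon> * \<mu> * \<Theta>) *\<^sub>R ((u $ j) *\<^sub>R w j + (u \<bullet> w j) *\<^sub>R axis j 1
                                          - ((2 / real CARD('n)) * w j $ j) *\<^sub>R u))"
    by (simp add: Xblk_def XDC_def block_mult_simps)
  also have "\<dots> = (2 * \<epsilon> * \<mu> * \<Theta>) *\<^sub>R ((\<Sum>j\<in>UNIV. (u $ j) *\<^sub>R w j) + (\<Sum>j\<in>UNIV. (u \<bullet> w j) *\<^sub>R axis j 1)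
                      - (\<Sum>j\<in>UNIV. ((2 / real CARD('n)) * w j $ j) *\<^sub>R u))"
    by (simp add: scaleR_sum_right[symmetric] sum.distrib sum_subtractf)
  also have "\<dots> = (2 * \<epsilon> * \<mu> * \<Theta>) *\<^sub>R ((\<Sum>j\<in>UNIV. (u $ j) *\<^sub>R w j) + (\<chi> k. u \<bullet> w k)
                      - ((2 / real CARD('n)) * (\<Sum>j\<in>UNIV. w j $ j)) *\<^sub>R u)"
    by (simp add: sum_scaleR_axis scaleR_sum_left[symmetric] sum_distrib_left)
  finally show ?thesis .
qed

lemma Xblk_row_C:
  fixes g :: "('n::finite) eidx \<Rightarrow> real^'n"
  assumes \<Theta>: "\<Theta> > 0"
    and gD: "\<And>j k. g (EDi j) $ k = Du $ j $ k / \<Theta> - u $ j * g\<Theta> $ k / \<Theta>\<^sup>2"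
    and gC: "g EC = (1 / (2 * \<Theta>\<^sup>2)) *\<^sub>R g\<Theta>"
    and gAC: "g EA + ((real CARD('n) + 2) * \<Theta>) *\<^sub>R g EC = g\<chi>"
  shows "(\<Sum>\<beta>'\<in>UNIV. Xblk \<epsilon> \<mu> \<nu> \<kappa> \<Theta> u EC \<beta>' *v g \<beta>')
     = \<epsilon> *\<^sub>R (((real CARD('n) + 2) * \<nu> * \<Theta>) *\<^sub>R g\<chi> + (2 * \<kappa>) *\<^sub>R g\<Theta> + (2 * \<mu>) *\<^sub>R (sigma_of Du *v u))"
proof -
  let ?n = "real CARD('n)"
  have trace: "(\<Sum>j\<in>UNIV. g (EDi j) $ j) = (\<Sum>j\<in>UNIV. Du $ j $ j) / \<Theta> - (u \<bullet> g\<Theta>) / \<Theta>\<^sup>2"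
    by (simp add: gD sum_subtractf sum_divide_distrib inner_vec_def)
  have u_gC: "u \<bullet> g EC = (u \<bullet> g\<Theta>) / (2 * \<Theta>\<^sup>2)"
    by (simp add: gC)
  have gA: "g EA $ k = g\<chi> $ k - ((?n + 2) * \<Theta>) * g EC $ k" for k
    using gAC by (auto simp: vec_eq_iff algebra_simps)
  have u_gD: "(\<Sum>j\<in>UNIV. u $ j * g (EDi j) $ k) = (\<Sum>j\<in>UNIV. u $ j * Du $ j $ k) / \<Theta> - (u \<bullet> u) * g\<Theta> $ k / \<Theta>\<^sup>2"
    for k
    by (simp add: gD right_diff_distrib sum_subtractf sum_divide_distrib[symmetric]
        sum_distrib_right[symmetric] inner_vec_def)
       (simp add: sum_divide_distrib sum_distrib_left mult_ac)
  have u_gD': "u \<bullet> g (EDi k) = (\<Sum>j\<in>UNIV. u $ j * Du $ k $ j) / \<Theta> - u $ k * (u \<bullet> g\<Theta>) / \<Theta>\<^sup>2" for k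
    by (simp add: inner_vec_def gD right_diff_distrib sum_subtractf sum_divide_distrib sum_distrib_left mult_ac)
  have norm_u: "(norm u)\<^sup>2 = u \<bullet> u" "norm u * norm u = u \<bullet> u"
    by (simp_all add: power2_norm_eq_inner flip: power2_eq_square)
  have "(\<Sum>\<beta>'\<in>UNIV. Xblk \<epsilon> \<mu> \<nu> \<kappa> \<Theta> u EC \<beta>' *v g \<beta>')
     = (\<Sum>j\<in>UNIV. Xblk \<epsilon> \<mu> \<nu> \<kappa> \<Theta> u EC (EDi j) *v g (EDi j)) + ((?n + 2) * \<epsilon> * \<nu> * \<Theta>) *\<^sub>R g EA
       + (\<epsilon> * \<Theta>) *\<^sub>R (((?n + 2)\<^sup>2 * \<nu> * \<Theta> + 4 * \<kappa> * \<Theta> + 4 * \<mu> * (norm u)\<^sup>2) *\<^sub>R g EC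
           + (4 * (?n - 2) / ?n * \<mu> * (u \<bullet> g EC)) *\<^sub>R u)"
    by (simp add: sum_UNIV_eidx Xblk_def block_mult_simps scaleR_add_right)
  also have "\<dots> = \<epsilon> *\<^sub>R (((?n + 2) * \<nu> * \<Theta>) *\<^sub>R g\<chi> + (2 * \<kappa>) *\<^sub>R g\<Theta> + (2 * \<mu>) *\<^sub>R (sigma_of Du *v u))"
    unfolding Xblk_row_C_D_part trace u_gC vec_eq_iff
    using \<Theta> by (simp add: u_gD u_gD' sigma_of_mult_vec_nth gA gC norm_u field_simps power2_eq_square)
  finally show ?thesis .
qed

section \<open>Smooth states\<close>

locale smooth_state =
  fixes \<gamma> :: "nat \<Rightarrow> real" and U :: "(real \<times> (real^'n::finite)) set"
    and \<rho> \<Theta> \<beta> :: "real \<Rightarrow> real^'n \<Rightarrow> real"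
    and u :: "real \<Rightarrow> real^'n \<Rightarrow> real^'n"
  assumes \<gamma>_pos: "\<forall>m\<ge>1. \<gamma> m > 0"
    and U_open: "open U"
    and smooth_\<rho>: "smooth_on U (\<lambda>(t, x). \<rho> t x)" and smooth_\<Theta>: "smooth_on U (\<lambda>(t, x). \<Theta> t x)"
    and smooth_\<beta>: "smooth_on U (\<lambda>(t, x). \<beta> t x)" and smooth_u: "\<forall>i. smooth_on U (\<lambda>(t, x). u t x $ i)"
    and pos: "\<forall>(t, x)\<in>U. \<rho> t x > 0 \<and> \<Theta> t x > 0 \<and> \<beta> t x \<in> interior (Sset \<gamma>)"
begin

abbreviation m1 :: "real \<Rightarrow> real^'n \<Rightarrow> real" where "m1 t x \<equiv> avg \<gamma> (\<beta> t x) (\<lambda>m. 1 / real m)"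
abbreviation muF :: "real \<Rightarrow> real^'n \<Rightarrow> real" where "muF t x \<equiv> mu_c \<gamma> (\<rho> t x) (\<Theta> t x) (\<beta> t x)"
abbreviation nuF :: "real \<Rightarrow> real^'n \<Rightarrow> real" where "nuF t x \<equiv> nu_c \<gamma> (\<rho> t x) (\<Theta> t x) (\<beta> t x)"
abbreviation kaF :: "real \<Rightarrow> real^'n \<Rightarrow> real" where
  "kaF t x \<equiv> kappa_c CARD('n) \<gamma> (\<rho> t x) (\<Theta> t x) (\<beta> t x)"
abbreviation chF :: "real \<Rightarrow> real^'n \<Rightarrow> real" where "chF t x \<equiv> chi_c \<gamma> (\<rho> t x) (\<Theta> t x) (\<beta> t x)"

lemma \<rho>_pos: "(t, x) \<in> U \<Longrightarrow> \<rho> t x > 0"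
  and \<Theta>_pos: "(t, x) \<in> U \<Longrightarrow> \<Theta> t x > 0"
  and \<beta>_interior: "(t, x) \<in> U \<Longrightarrow> \<beta> t x \<in> interior (Sset \<gamma>)"
  using pos by auto

lemma C2_\<rho>: "C2_on U \<rho>"
  and C2_\<Theta>: "C2_on U \<Theta>"
  and C2_\<beta>: "C2_on U \<beta>"
  and C2_u: "C2_on U (\<lambda>t x. u t x $ i)"
  using smooth_on_imp_C2_on smooth_\<rho> smooth_\<Theta> smooth_\<beta> smooth_u by blast+

lemmas C1_\<rho> = C2_on_imp_C1_on[OF C2_\<rho>] and C1_\<Theta> = C2_on_imp_C1_on[OF C2_\<Theta>]
  and C1_u = C2_on_imp_C1_on[OF C2_u]

lemma C2_moment_series: "C2_on U (\<lambda>t x. moment_series \<gamma> j (\<beta> t x))"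
  by (rule C2_on_comp[OF U_open C2_\<beta>, where h' = "moment_series \<gamma> (Suc j)"
        and h'' = "moment_series \<gamma> (Suc (Suc j))"])
     (auto intro!: moment_series_has_real_derivative[OF \<gamma>_pos] \<beta>_interior)

lemma pd_moment_series:
  "(t, x) \<in> U \<Longrightarrow> pd k (\<lambda>t x. moment_series \<gamma> j (\<beta> t x)) t x = moment_series \<gamma> (Suc j) (\<beta> t x) * pd k \<beta> t x"
  by (rule C1_on_comp(2)[OF C2_on_imp_C1_on[OF C2_\<beta>]])
     (auto intro!: moment_series_has_real_derivative[OF \<gamma>_pos] \<beta>_interior)

lemma moment_series_\<beta>_pos: "(t, x) \<in> U \<Longrightarrow> moment_series \<gamma> j (\<beta> t x) > 0"
  by (rule moment_series_pos[OF \<gamma>_pos \<beta>_interior])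

lemma C2_ln_moment_series: "C2_on U (\<lambda>t x. ln (moment_series \<gamma> 2 (\<beta> t x)))"
  and pd_ln_moment_series: "(t, x) \<in> U \<Longrightarrow> pd k (\<lambda>t x. ln (moment_series \<gamma> 2 (\<beta> t x))) t x
        = moment_series \<gamma> 3 (\<beta> t x) * pd k \<beta> t x / moment_series \<gamma> 2 (\<beta> t x)"
  using C2_on_ln[OF U_open C2_moment_series moment_series_\<beta>_pos] pd_moment_series[of t x k 2]
  by (simp_all add: numeral_3_eq_3 numeral_2_eq_2)

lemma pd_u_over_\<Theta>:
  assumes "(t, x) \<in> U"
  shows "pd k (\<lambda>t x. u t x $ j / \<Theta> t x) t x
           = pd k (\<lambda>t x. u t x $ j) t x / \<Theta> t x - u t x $ j * pd k \<Theta> t x / (\<Theta> t x)\<^sup>2"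
proof -
  note C2_inverse_\<Theta> = C2_on_inverse(1)[OF U_open C2_\<Theta> \<Theta>_pos]
  have "pd k (\<lambda>t x. u t x $ j * (1 / \<Theta> t x)) t x
      = pd k (\<lambda>t x. u t x $ j) t x * (1 / \<Theta> t x) + u t x $ j * pd k (\<lambda>t x. 1 / \<Theta> t x) t x"
    by (rule C1_on_mult(2)[OF C1_u C2_on_imp_C1_on[OF C2_inverse_\<Theta>] assms])
  then show ?thesis using C2_on_inverse(2)[OF U_open C2_\<Theta> \<Theta>_pos assms, of k] by (simp add: field_simps)
qed

lemma pd_C_var:
  assumes "(t, x) \<in> U"
  shows "pd k (\<lambda>t x. - 1 / (2 * \<Theta> t x)) t x = pd k \<Theta> t x / (2 * (\<Theta> t x)\<^sup>2)"
proof -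
  note C2_inverse_\<Theta> = C2_on_inverse(1)[OF U_open C2_\<Theta> \<Theta>_pos]
  have "pd k (\<lambda>t x. (- 1 / 2) * (1 / \<Theta> t x)) t x
      = pd k (\<lambda>t x. - 1 / 2) t x * (1 / \<Theta> t x) + (- 1 / 2) * pd k (\<lambda>t x. 1 / \<Theta> t x) t x"
    by (rule C1_on_mult(2)[OF C1_on_const C2_on_imp_C1_on[OF C2_inverse_\<Theta>] assms])
  moreover have "(\<lambda>t x. - 1 / (2 * \<Theta> t x)) = (\<lambda>t x. (- 1 / 2) * (1 / \<Theta> t x))" by auto
  ultimately show ?thesis using C2_on_inverse(2)[OF U_open C2_\<Theta> \<Theta>_pos assms, of k] by simp
qed

lemma chF_eq_ln:
  "(t, x) \<in> U \<Longrightarrow> chF t x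
     = ln (\<rho> t x) + ln (\<Theta> t x) - ln (moment_series \<gamma> 2 (\<beta> t x))"
  using \<rho>_pos[of t x] \<Theta>_pos[of t x] moment_series_\<beta>_pos[of t x 2]
  by (simp add: chi_c_def Wsum_eq_moment_series[OF \<gamma>_pos \<beta>_interior] ln_div ln_mult)

lemma C2_chi: "C2_on U chF"
  by (rule C2_on_cong[OF U_open C2_on_diff[OF U_open C2_on_add[OF U_open
          C2_on_ln(1)[OF U_open C2_\<rho> \<rho>_pos] C2_on_ln(1)[OF U_open C2_\<Theta> \<Theta>_pos]] C2_ln_moment_series]])
     (use chF_eq_ln in auto)

lemma pd_chi:
  assumes "(t, x) \<in> U"
  shows "pd k chF t x
     = pd k \<rho> t x / \<rho> t x + pd k \<Theta> t x / \<Theta> t x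
       - moment_series \<gamma> 3 (\<beta> t x) * pd k \<beta> t x / moment_series \<gamma> 2 (\<beta> t x)"
proof -
  note ln_\<rho> = C2_on_ln[OF U_open C2_\<rho> \<rho>_pos] and ln_\<Theta> = C2_on_ln[OF U_open C2_\<Theta> \<Theta>_pos]
  have "pd k chF t x
      = pd k (\<lambda>t x. ln (\<rho> t x) + ln (\<Theta> t x) - ln (moment_series \<gamma> 2 (\<beta> t x))) t x"
    by (rule pd_cong_on[OF U_open assms]) (use chF_eq_ln in auto)
  also have "\<dots> = pd k (\<lambda>t x. ln (\<rho> t x)) t x + pd k (\<lambda>t x. ln (\<Theta> t x)) t x
                   - pd k (\<lambda>t x. ln (moment_series \<gamma> 2 (\<beta> t x))) t x"
    using C1_on_diff(2)[OF C1_on_add(1)[OF C2_on_imp_C1_on[OF ln_\<rho>(1)] C2_on_imp_C1_on[OF ln_\<Theta>(1)]]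
          C2_on_imp_C1_on[OF C2_ln_moment_series] assms]
      C1_on_add(2)[OF C2_on_imp_C1_on[OF ln_\<rho>(1)] C2_on_imp_C1_on[OF ln_\<Theta>(1)] assms]
    by simp
  finally show ?thesis
    using C2_on_ln(2)[OF U_open C2_\<rho> \<rho>_pos assms] C2_on_ln(2)[OF U_open C2_\<Theta> \<Theta>_pos assms]
      pd_ln_moment_series[OF assms]
    by simp
qed

lemma A_var_eq_ln:
  "(t, x) \<in> U \<Longrightarrow> ln (\<rho> t x / Zfun CARD('n) \<gamma> (\<beta> t x) (\<Theta> t x))
     = ln (\<rho> t x) - (real CARD('n) / 2) * ln (2 * pi) - (real CARD('n) / 2) * ln (\<Theta> t x)
       - ln (moment_series \<gamma> 2 (\<beta> t x))"
  using \<rho>_pos[of t x] \<Theta>_pos[of t x] moment_series_\<beta>_pos[of t x 2]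
  by (simp add: Zfun_def Wsum_eq_moment_series[OF \<gamma>_pos \<beta>_interior] ln_div ln_mult ln_powr)
     (simp add: algebra_simps)

lemma pd_A_var:
  assumes "(t, x) \<in> U"
  shows "pd k (\<lambda>t x. ln (\<rho> t x / Zfun CARD('n) \<gamma> (\<beta> t x) (\<Theta> t x))) t x
     = pd k \<rho> t x / \<rho> t x - (real CARD('n) / 2) * (pd k \<Theta> t x / \<Theta> t x)
       - moment_series \<gamma> 3 (\<beta> t x) * pd k \<beta> t x / moment_series \<gamma> 2 (\<beta> t x)"
proof -
  let ?c = "real CARD('n) / 2"
  note ln_\<rho> = C2_on_ln[OF U_open C2_\<rho> \<rho>_pos] and ln_\<Theta> = C2_on_ln[OF U_open C2_\<Theta> \<Theta>_pos]
  have C1_1: "C1_on U (\<lambda>t x. ln (\<rho> t x) - ?c * ln (2 * pi))"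
    by (rule C1_on_diff(1)[OF C2_on_imp_C1_on[OF ln_\<rho>(1)] C1_on_const])
  have C1_2: "C1_on U (\<lambda>t x. ?c * ln (\<Theta> t x))"
    by (rule C1_on_mult(1)[OF C1_on_const C2_on_imp_C1_on[OF ln_\<Theta>(1)]])
  have "pd k (\<lambda>t x. ln (\<rho> t x / Zfun CARD('n) \<gamma> (\<beta> t x) (\<Theta> t x))) t x
      = pd k (\<lambda>t x. (ln (\<rho> t x) - ?c * ln (2 * pi)) - ?c * ln (\<Theta> t x)
                     - ln (moment_series \<gamma> 2 (\<beta> t x))) t x"
    by (rule pd_cong_on[OF U_open assms]) (use A_var_eq_ln in auto)
  also have "\<dots> = pd k (\<lambda>t x. ln (\<rho> t x)) t x - pd k (\<lambda>t x. ?c * ln (\<Theta> t x)) t x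
                   - pd k (\<lambda>t x. ln (moment_series \<gamma> 2 (\<beta> t x))) t x"
    using C1_on_diff(2)[OF C1_on_diff(1)[OF C1_1 C1_2] C2_on_imp_C1_on[OF C2_ln_moment_series] assms]
      C1_on_diff(2)[OF C1_1 C1_2 assms] C1_on_diff(2)[OF C2_on_imp_C1_on[OF ln_\<rho>(1)] C1_on_const assms]
    by simp
  also have "pd k (\<lambda>t x. ?c * ln (\<Theta> t x)) t x = ?c * pd k (\<lambda>t x. ln (\<Theta> t x)) t x"
    by (simp only: C1_on_mult(2)[OF C1_on_const C2_on_imp_C1_on[OF ln_\<Theta>(1)] assms] pd_const
        mult_zero_left add_0_left)
  finally show ?thesis
    using C2_on_ln(2)[OF U_open C2_\<rho> \<rho>_pos assms] C2_on_ln(2)[OF U_open C2_\<Theta> \<Theta>_pos assms]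
      pd_ln_moment_series[OF assms]
    by simp
qed

lemma C2_avg_inverse: "C2_on U m1"
  by (rule C2_on_cong[OF U_open C2_on_mult[OF U_open C2_moment_series
          C2_on_inverse(1)[OF U_open C2_moment_series moment_series_\<beta>_pos]]])
     (auto simp: avg_inverse_eq_moment_series \<gamma>_pos \<beta>_interior)

lemma C2_avg_inverse_square: "C2_on U (\<lambda>t x. avg \<gamma> (\<beta> t x) (\<lambda>m. 1 / (real m)\<^sup>2))"
  by (rule C2_on_cong[OF U_open C2_on_mult[OF U_open C2_moment_series
          C2_on_inverse(1)[OF U_open C2_moment_series moment_series_\<beta>_pos]]])
     (auto simp: avg_inverse_square_eq_moment_series \<gamma>_pos \<beta>_interior)

lemma C2_mu: "C2_on U muF"
  unfolding mu_c_def by (intro C2_on_mult[OF U_open] C2_\<rho> C2_\<Theta> C2_avg_inverse)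

lemma C2_nu: "C2_on U nuF"
proof -
  have "C2_on U (\<lambda>t x. (m1 t x)\<^sup>2)"
    by (rule C2_on_cong[OF U_open C2_on_mult[OF U_open C2_avg_inverse C2_avg_inverse]])
       (simp add: power2_eq_square)
  then show ?thesis
    unfolding nu_c_def by (intro C2_on_mult[OF U_open] C2_on_diff[OF U_open] C2_\<rho> C2_\<Theta> C2_avg_inverse_square)
qed

lemma C2_kappa: "C2_on U kaF"
  unfolding kappa_c_def by (intro C2_on_mult[OF U_open] C2_\<rho> C2_\<Theta> C2_avg_inverse_square C2_on_const)

lemma grad_Afield_D:
  assumes "(t, x) \<in> U"
  shows "grad (\<lambda>t x. Afield \<gamma> \<rho> u \<Theta> \<beta> t x (EDi j)) t x $ k
           = jac u t x $ j $ k / \<Theta> t x - u t x $ j * grad \<Theta> t x $ k / (\<Theta> t x)\<^sup>2"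
proof -
  have "(\<lambda>t x. Afield \<gamma> \<rho> u \<Theta> \<beta> t x (EDi j)) = (\<lambda>t x. u t x $ j / \<Theta> t x)"
    by (simp add: Afield_def Avar_def)
  then show ?thesis by (simp add: grad_def jac_def pdx_eq_pd pd_u_over_\<Theta>[OF assms])
qed

lemma grad_Afield_C:
  assumes "(t, x) \<in> U"
  shows "grad (\<lambda>t x. Afield \<gamma> \<rho> u \<Theta> \<beta> t x EC) t x = (1 / (2 * (\<Theta> t x)\<^sup>2)) *\<^sub>R grad \<Theta> t x"
proof -
  have C_var: "(\<lambda>t x. Afield \<gamma> \<rho> u \<Theta> \<beta> t x EC) = (\<lambda>t x. - 1 / (2 * \<Theta> t x))"
    by (simp add: Afield_def Avar_def)
  show ?thesis
    unfolding C_var grad_def pdx_eq_pd by (simp only: pd_C_var[OF assms]) (simp add: vec_eq_iff)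
qed

lemma grad_Afield_A_C:
  assumes "(t, x) \<in> U"
  shows "grad (\<lambda>t x. Afield \<gamma> \<rho> u \<Theta> \<beta> t x EA) t x
           + ((real CARD('n) + 2) * \<Theta> t x) *\<^sub>R grad (\<lambda>t x. Afield \<gamma> \<rho> u \<Theta> \<beta> t x EC) t x
         = grad (\<lambda>t x. chi_c \<gamma> (\<rho> t x) (\<Theta> t x) (\<beta> t x)) t x"
proof -
  have "(\<lambda>t x. Afield \<gamma> \<rho> u \<Theta> \<beta> t x EA) = (\<lambda>t x. ln (\<rho> t x / Zfun CARD('n) \<gamma> (\<beta> t x) (\<Theta> t x)))"
    by (simp add: Afield_def Avar_def)
  then show ?thesis
    unfolding grad_Afield_C[OF assms] using \<Theta>_pos[OF assms]
    by (simp add: vec_eq_iff grad_def pdx_eq_pd pd_A_var[OF assms] pd_chi[OF assms]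
        field_simps power2_eq_square)
qed

abbreviation grad_A :: "real \<Rightarrow> real^'n \<Rightarrow> 'n eidx \<Rightarrow> real^'n" where
  "grad_A t x \<beta>' \<equiv> grad (\<lambda>t x. Afield \<gamma> \<rho> u \<Theta> \<beta> t x \<beta>') t x"

abbreviation diffusive_flux :: "real \<Rightarrow> 'n eidx \<Rightarrow> real \<Rightarrow> real^'n \<Rightarrow> real^'n" where
  "diffusive_flux \<epsilon> \<alpha> t x \<equiv> \<Sum>\<beta>'\<in>UNIV. Xfield \<gamma> \<epsilon> \<rho> u \<Theta> \<beta> t x \<alpha> \<beta>' *v grad_A t x \<beta>'"

lemma diffusive_flux_A:
  "(t, x) \<in> U \<Longrightarrow> diffusive_flux \<epsilon> EA t x = \<epsilon> *\<^sub>R (nuF t x *\<^sub>R grad chF t x)"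
  unfolding Xfield_def by (rule Xblk_row_A[OF grad_Afield_A_C])

lemma diffusive_flux_B: "diffusive_flux \<epsilon> EB t x = 0"
  unfolding Xfield_def by (rule Xblk_row_B)

lemma diffusive_flux_D:
  "(t, x) \<in> U \<Longrightarrow> diffusive_flux \<epsilon> (EDi i) t x = \<epsilon> *\<^sub>R (\<chi> k. muF t x * Defs.sigma u t x $ i $ k)"
  unfolding Xfield_def sigma_of_jac[symmetric]
  by (rule Xblk_row_D[OF \<Theta>_pos grad_Afield_D grad_Afield_C])

lemma diffusive_flux_C:
  "(t, x) \<in> U \<Longrightarrow> diffusive_flux \<epsilon> EC t x
     = \<epsilon> *\<^sub>R (((real CARD('n) + 2) * nuF t x * \<Theta> t x) *\<^sub>R grad chF t x
              + (2 * kaF t x) *\<^sub>R grad \<Theta> t x + (2 * muF t x) *\<^sub>R (Defs.sigma u t x *v u t x))"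
  unfolding Xfield_def sigma_of_jac[symmetric]
  by (rule Xblk_row_C[OF \<Theta>_pos grad_Afield_D grad_Afield_C grad_Afield_A_C])

abbreviation entropic_lhs :: "'n eidx \<Rightarrow> real \<Rightarrow> real^'n \<Rightarrow> real" where
  "entropic_lhs \<alpha> t x \<equiv> pdt (\<lambda>t x. pSigma \<gamma> \<alpha> (Afield \<gamma> \<rho> u \<Theta> \<beta> t x)) t x
                         + divg (\<lambda>t x. pPhi \<gamma> \<alpha> (Afield \<gamma> \<rho> u \<Theta> \<beta> t x)) t x"

lemma entropic_lhs_A:
  "(t, x) \<in> U \<Longrightarrow> entropic_lhs EA t x
     = pdt (\<lambda>t x. \<rho> t x * m1 t x) t x + divg (\<lambda>t x. (\<rho> t x * m1 t x) *\<^sub>R u t x) t x"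
  by (intro arg_cong2[where f="(+)"] pdt_cong_on[OF U_open] divg_cong_on[OF U_open])
     (auto simp: Afield_def intro!: pSigma_Avar_A[OF \<gamma>_pos] pPhi_Avar_A[OF \<gamma>_pos] \<rho>_pos \<Theta>_pos \<beta>_interior)

lemma entropic_lhs_B:
  "(t, x) \<in> U \<Longrightarrow> entropic_lhs EB t x = pdt \<rho> t x + divg (\<lambda>t x. \<rho> t x *\<^sub>R u t x) t x"
  by (intro arg_cong2[where f="(+)"] pdt_cong_on[OF U_open] divg_cong_on[OF U_open])
     (auto simp: Afield_def intro!: pSigma_Avar_B[OF \<gamma>_pos] pPhi_Avar_B[OF \<gamma>_pos] \<rho>_pos \<Theta>_pos \<beta>_interior)

lemma entropic_lhs_C:
  "(t, x) \<in> U \<Longrightarrow> entropic_lhs EC t x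
     = pdt (\<lambda>t x. \<rho> t x * (norm (u t x))\<^sup>2 + real CARD('n) * \<rho> t x * \<Theta> t x * m1 t x) t x
       + divg (\<lambda>t x. (\<rho> t x * (norm (u t x))\<^sup>2) *\<^sub>R u t x
                      + ((real CARD('n) + 2) * \<rho> t x * \<Theta> t x * m1 t x) *\<^sub>R u t x) t x"
  by (intro arg_cong2[where f="(+)"] pdt_cong_on[OF U_open] divg_cong_on[OF U_open])
     (auto simp: Afield_def intro!: pSigma_Avar_C[OF \<gamma>_pos] pPhi_Avar_C[OF \<gamma>_pos] \<rho>_pos \<Theta>_pos \<beta>_interior)

lemma entropic_lhs_D:
  assumes "(t, x) \<in> U"
  shows "entropic_lhs (EDi i) t x
     = ((\<chi> j. pdt (\<lambda>t x. \<rho> t x * u t x $ j) t x) + divm (\<lambda>t x. \<rho> t x *\<^sub>R outer (u t x) (u t x)) t x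
        + grad (\<lambda>t x. \<rho> t x * \<Theta> t x * m1 t x) t x) $ i"
proof -
  have C1_p: "C1_on U (\<lambda>t x. \<rho> t x * \<Theta> t x * m1 t x)"
    by (intro C1_on_mult C1_\<rho> C1_\<Theta> C2_on_imp_C1_on[OF C2_avg_inverse])
  have C1_\<rho>uu: "C1_on U (\<lambda>t x. \<rho> t x * (u t x $ i * u t x $ k))" for k
    by (intro C1_on_mult C1_\<rho> C1_u)
  have density: "pdt (\<lambda>t x. pSigma \<gamma> (EDi i) (Afield \<gamma> \<rho> u \<Theta> \<beta> t x)) t x
      = pdt (\<lambda>t x. \<rho> t x * u t x $ i) t x"
    by (intro pdt_cong_on[OF U_open assms])
       (auto simp: Afield_def intro!: pSigma_Avar_D[OF \<gamma>_pos] \<rho>_pos \<Theta>_pos \<beta>_interior)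
  have "divg (\<lambda>t x. pPhi \<gamma> (EDi i) (Afield \<gamma> \<rho> u \<Theta> \<beta> t x)) t x
      = (\<Sum>k\<in>UNIV. pdx k (\<lambda>t x. \<rho> t x * (u t x $ i * u t x $ k)
                               + axis i 1 $ k * (\<rho> t x * \<Theta> t x * m1 t x)) t x)"
    unfolding divg_def
    by (intro sum.cong refl pdx_cong_on[OF U_open assms])
       (auto simp: Afield_def pPhi_Avar_D[OF \<gamma>_pos] \<rho>_pos \<Theta>_pos \<beta>_interior mult_ac)
  also have "\<dots> = (\<Sum>k\<in>UNIV. pdx k (\<lambda>t x. \<rho> t x * (u t x $ i * u t x $ k)) t x
                            + axis i 1 $ k * pdx k (\<lambda>t x. \<rho> t x * \<Theta> t x * m1 t x) t x)"
    by (intro sum.cong refl)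
       (simp add: pdx_add[OF C1_\<rho>uu C1_on_mult(1)[OF C1_on_const C1_p] assms] pdx_cmult[OF C1_p assms])
  also have "\<dots> = (\<Sum>k\<in>UNIV. pdx k (\<lambda>t x. \<rho> t x * (u t x $ i * u t x $ k)) t x)
                   + pdx i (\<lambda>t x. \<rho> t x * \<Theta> t x * m1 t x) t x"
    by (simp add: sum.distrib axis_def if_distrib[where f="\<lambda>x. x * _"] cong: if_cong)
  finally show ?thesis using density by (simp add: divm_def grad_def outer_def)
qed

lemma C1_sigma: "C1_on U (\<lambda>t x. Defs.sigma u t x $ i $ k)"
  unfolding sigma_nth by (intro C1_on_diff C1_on_add C1_on_mult C1_on_const C1_pdx C2_u C1_on_sum) auto

lemma entropic_rhs_A:
  assumes "(t, x) \<in> U"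
  shows "divg (diffusive_flux \<epsilon> EA) t x = \<epsilon> * divg (\<lambda>t x. nuF t x *\<^sub>R grad chF t x) t x"
proof -
  have "divg (diffusive_flux \<epsilon> EA) t x = divg (\<lambda>t x. \<epsilon> *\<^sub>R (nuF t x *\<^sub>R grad chF t x)) t x"
    by (rule divg_cong_on[OF U_open assms]) (auto simp only: diffusive_flux_A)
  also have "\<dots> = \<epsilon> * divg (\<lambda>t x. nuF t x *\<^sub>R grad chF t x) t x"
    by (rule divg_scaleR[OF _ assms]) (simp add: grad_def, intro C1_on_mult C2_on_imp_C1_on[OF C2_nu] C1_pdx C2_chi)
  finally show ?thesis .
qed

lemma entropic_rhs_B: "divg (diffusive_flux \<epsilon> EB) t x = 0"
  by (simp only: diffusive_flux_B divg_zero)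

lemma entropic_rhs_D:
  assumes "(t, x) \<in> U"
  shows "divg (diffusive_flux \<epsilon> (EDi i)) t x = (\<epsilon> *\<^sub>R divm (\<lambda>t x. muF t x *\<^sub>R Defs.sigma u t x) t x) $ i"
proof -
  have "divg (diffusive_flux \<epsilon> (EDi i)) t x = divg (\<lambda>t x. \<epsilon> *\<^sub>R (\<chi> k. muF t x * Defs.sigma u t x $ i $ k)) t x"
    by (rule divg_cong_on[OF U_open assms]) (auto simp only: diffusive_flux_D)
  also have "\<dots> = \<epsilon> * divg (\<lambda>t x. \<chi> k. muF t x * Defs.sigma u t x $ i $ k) t x"
    by (rule divg_scaleR[OF _ assms]) (simp, intro C1_on_mult C2_on_imp_C1_on[OF C2_mu] C1_sigma)
  finally show ?thesis by (simp add: divg_def divm_def)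
qed

lemma entropic_rhs_C:
  assumes "(t, x) \<in> U"
  shows "divg (diffusive_flux \<epsilon> EC) t x
     = \<epsilon> * divg (\<lambda>t x. ((real CARD('n) + 2) * nuF t x * \<Theta> t x) *\<^sub>R grad chF t x
                       + (2 * kaF t x) *\<^sub>R grad \<Theta> t x + (2 * muF t x) *\<^sub>R (Defs.sigma u t x *v u t x)) t x"
proof -
  have "divg (diffusive_flux \<epsilon> EC) t x
      = divg (\<lambda>t x. \<epsilon> *\<^sub>R (((real CARD('n) + 2) * nuF t x * \<Theta> t x) *\<^sub>R grad chF t x
                       + (2 * kaF t x) *\<^sub>R grad \<Theta> t x + (2 * muF t x) *\<^sub>R (Defs.sigma u t x *v u t x))) t x"
    by (rule divg_cong_on[OF U_open assms]) (auto simp only: diffusive_flux_C)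
  also have "\<dots> = \<epsilon> * divg (\<lambda>t x. ((real CARD('n) + 2) * nuF t x * \<Theta> t x) *\<^sub>R grad chF t x
                       + (2 * kaF t x) *\<^sub>R grad \<Theta> t x + (2 * muF t x) *\<^sub>R (Defs.sigma u t x *v u t x)) t x"
    by (rule divg_scaleR[OF _ assms])
       (simp add: grad_def matrix_vector_mult_def,
        intro C1_on_add C1_on_mult C1_on_const C2_on_imp_C1_on[OF C2_nu] C1_\<Theta> C2_on_imp_C1_on[OF C2_kappa]
          C2_on_imp_C1_on[OF C2_mu] C1_pdx C2_chi C2_\<Theta> C1_on_sum C1_sigma C1_u; simp)
  finally show ?thesis .
qed

lemma NSME_iff_entropic_system:
  assumes "(t, x) \<in> U"
  shows "NSME \<gamma> \<epsilon> \<rho> u \<Theta> \<beta> t x \<longleftrightarrow> entropic_system \<gamma> \<epsilon> \<rho> u \<Theta> \<beta> t x"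
  unfolding NSME_def Let_def entropic_system_def all_eidx vec_eq_iff[where x="_ + _ + _"]
  by (simp only: entropic_lhs_A[OF assms] entropic_rhs_A[OF assms] entropic_lhs_B[OF assms] entropic_rhs_B
      entropic_lhs_D[OF assms] entropic_rhs_D[OF assms] entropic_lhs_C[OF assms] entropic_rhs_C[OF assms])
     blast

end

theorem proposition4p5:
  fixes \<gamma> :: "nat \<Rightarrow> real" and \<epsilon> :: real
    and U :: "(real \<times> (real^'n)) set"
    and \<rho> \<Theta> \<beta> :: "real \<Rightarrow> real^'n \<Rightarrow> real"
    and u :: "real \<Rightarrow> real^'n \<Rightarrow> real^'n"
  assumes gamma_pos: "\<forall>m\<ge>1. \<gamma> m > 0"
    and S_ne: "Sset \<gamma> \<noteq> {}"
    and eps_pos: "\<epsilon> > 0"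
    and U_open: "open U"
    and smooth: "smooth_on U (\<lambda>(t, x). \<rho> t x)" "smooth_on U (\<lambda>(t, x). \<Theta> t x)"
      "smooth_on U (\<lambda>(t, x). \<beta> t x)" "\<forall>i. smooth_on U (\<lambda>(t, x). u t x $ i)"
    and pos: "\<forall>(t, x)\<in>U. \<rho> t x > 0 \<and> \<Theta> t x > 0 \<and> \<beta> t x \<in> interior (Sset \<gamma>)"
  shows "((\<forall>(t, x)\<in>U. NSME \<gamma> \<epsilon> \<rho> u \<Theta> \<beta> t x)
            \<longleftrightarrow> (\<forall>(t, x)\<in>U. entropic_system \<gamma> \<epsilon> \<rho> u \<Theta> \<beta> t x))
         \<and> (\<forall>(t, x)\<in>U. \<forall>\<alpha> \<beta>'. Xfield \<gamma> \<epsilon> \<rho> u \<Theta> \<beta> t x \<alpha> \<beta>'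
                                = transpose (Xfield \<gamma> \<epsilon> \<rho> u \<Theta> \<beta> t x \<beta>' \<alpha>))"
proof -
  interpret smooth_state \<gamma> U \<rho> \<Theta> \<beta> u
    using gamma_pos U_open smooth pos by unfold_locales auto
  show ?thesis
    using NSME_iff_entropic_system by (auto simp: Xfield_def intro: Xblk_symmetric)
qed

end
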